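(* Let $n\ge 1$. For $a\in\{0,1\}$ let $\lvert \hat a\rangle=\frac{1}{\sqrt2}(\lvert 0\rangle+(-1)^a\lvert 1\rangle)$. For bits $r_0,r_1,s\in\{0,1\}$ define the two-qubit state on qubits $A_0A_1$ $$\lvert\psi^{s}_{r_0r_1}\rangle_{A_0A_1}=\lvert r_0\rangle_{A_s}\otimes\lvert \hat r_1\rangle_{A_{\bar s}},$$ and for strings $\mathbf r_0,\mathbf r_1,\mathbf s\in\{0,1\}^n$ (with $j$-th entries $r_0^j,r_1^j,s^j$) define the $2n$-qubit state $\lvert\Psi^{\mathbf s}_{\mathbf r_0\mathbf r_1}\rangle_A=\bigotimes_{j=1}^n\lvert\psi^{s^j}_{r_0^jr_1^j}\rangle_{A_0^jA_1^j}$, where $A=A_0^1A_1^1\cdots A_0^nA_1^n$. Consider any (cheating) strategy consisting of: a finite-dimensional ancilla $E$ in a fixed pure state $\lvert\chi\rangle_E$; a unitary $U$ on $AE$, where $AE=B_0B_1B'$ is decomposed into three finite-dimensional subsystems; a projective measurement $\{R^{b'}\}_{b'\in\{0,1\}}$ on $B'$; and, for each $i\in\{0,1\}$, $\mathbf s\in\{0,1\}^n$, $b'\in\{0,1\}$, a projective measurement $\{\Pi^{\mathbf e}_{i\mathbf s b'}\}_{\mathbf e\in\{0,1\}^n}$ on $B_i$. Let $\lvert\Phi^{\mathbf s}_{\mathbf r_0\mathbf r_1}\rangle_{B_0B_1B'}=U(\lvert\Psi^{\mathbf s}_{\mathbf r_0\mathbf r_1}\rangle_A\otimes\lvert\chi\rangle_E)$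 and $$p_n=\frac{1}{2^{3n}}\sum_{\mathbf r_0,\mathbf r_1,\mathbf s\in\{0,1\}^n}\ \sum_{b'\in\{0,1\}}\langle\Phi^{\mathbf s}_{\mathbf r_0\mathbf r_1}\rvert\,\Pi^{\mathbf r_{b'}}_{0\mathbf s b'}\otimes\Pi^{\mathbf r_{\bar b'}}_{1\mathbf s b'}\otimes R^{b'}\,\lvert\Phi^{\mathbf s}_{\mathbf r_0\mathbf r_1}\rangle,$$ where $\bar b'=b'\oplus1$. Then for every such strategy, $$p_n\le\Bigl(\frac12+\frac{1}{2\sqrt2}\Bigr)^n.$$
   Context: $p_n$ is the probability that Bob, in a spacetime-constrained oblivious transfer protocol, simultaneously outputs $\mathbf r_{b'}$ from system $B_0$ and $\mathbf r_{\bar b'}$ from system $B_1$, when $\mathbf r_0,\mathbf r_1,\mathbf s$ are uniformly random and Bob receives $\lvert\Psi^{\mathbf s}_{\mathbf r_0\mathbf r_1}\rangle$; the measurements on $B_i$ may depend on $\mathbf s$ and on the outcome $b'$ of the measurement on $B'$. $\oplus$ is addition modulo 2. *)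

theory Defs
  imports Complex_Main "Jordan_Normal_Form.Schur_Decomposition"
begin

text \<open>Finite-dimensional quantum mechanics with Jordan_Normal_Form matrices over complex.
  Tensor products are Kronecker products; the first factor is the most significant index.\<close>

definition kron_vec :: "complex vec \<Rightarrow> complex vec \<Rightarrow> complex vec" where
  "kron_vec v w = vec (dim_vec v * dim_vec w)
      (\<lambda>i. v $ (i div dim_vec w) * w $ (i mod dim_vec w))"

definition kron_mat :: "complex mat \<Rightarrow> complex mat \<Rightarrow> complex mat" where
  "kron_mat A B = mat (dim_row A * dim_row B) (dim_col A * dim_col B)
      (\<lambda>(i, j). A $$ (i div dim_row B, j div dim_col B) * B $$ (i mod dim_row B, j mod dim_col B))"

text \<open>Computational basis states |0>, |1> and Hadamard states |hat a> of one qubit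
  (bits encoded as bool, False = 0, True = 1).\<close>

definition ket :: "bool \<Rightarrow> complex vec" where
  "ket b = unit_vec 2 (if b then 1 else 0)"

definition ket_hat :: "bool \<Rightarrow> complex vec" where
  "ket_hat a = vec 2 (\<lambda>i. (if i = 0 then 1 else (if a then -1 else 1)) / complex_of_real (sqrt 2))"

text \<open>Two-qubit state on A0 A1 (A0 is the first tensor factor):
  |r0> on A_s and |hat r1> on A_{not s}.\<close>

definition psi :: "bool \<Rightarrow> bool \<Rightarrow> bool \<Rightarrow> complex vec" where
  "psi s r0 r1 = (if s then kron_vec (ket_hat r1) (ket r0) else kron_vec (ket r0) (ket_hat r1))"

fun kron_vec_list :: "complex vec list \<Rightarrow> complex vec" where
  "kron_vec_list [] = vec 1 (\<lambda>_. 1)"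
| "kron_vec_list (v # vs) = kron_vec v (kron_vec_list vs)"

text \<open>The 2n-qubit state on A = A_0^1 A_1^1 ... A_0^n A_1^n; bit strings are bool lists of length n.\<close>

definition Psi :: "nat \<Rightarrow> bool list \<Rightarrow> bool list \<Rightarrow> bool list \<Rightarrow> complex vec" where
  "Psi n s r0 r1 = kron_vec_list (map (\<lambda>j. psi (s ! j) (r0 ! j) (r1 ! j)) [0..<n])"

definition bitstrings :: "nat \<Rightarrow> bool list set" where
  "bitstrings n = {xs. length xs = n}"

definition cinner :: "complex vec \<Rightarrow> complex vec \<Rightarrow> complex" where
  "cinner v w = (\<Sum>i<dim_vec v. cnj (v $ i) * w $ i)"

definition unitary :: "nat \<Rightarrow> complex mat \<Rightarrow> bool" where
  "unitary d U \<longleftrightarrow> U \<in> carrier_mat d d \<and> mat_adjoint U * U = 1\<^sub>m d \<and> U * mat_adjoint U = 1\<^sub>m d"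

definition projective_measurement :: "nat \<Rightarrow> 'o set \<Rightarrow> ('o \<Rightarrow> complex mat) \<Rightarrow> bool" where
  "projective_measurement d I P \<longleftrightarrow> finite I \<and>
     (\<forall>x\<in>I. P x \<in> carrier_mat d d \<and> mat_adjoint (P x) = P x \<and> P x * P x = P x) \<and>
     (\<forall>i<d. \<forall>j<d. (\<Sum>x\<in>I. P x $$ (i, j)) = 1\<^sub>m d $$ (i, j))"

text \<open>Cheating strategy: ancilla dimension dE, pure state chi, unitary U on AE (dimension 4^n * dE),
  identified with B0 B1 B' of dimensions d0, d1, d', measurement R on B', measurements
  Proj i s b' on B_i with outcomes in bitstrings n.\<close>

definition strategy ::
  "nat \<Rightarrow> nat \<Rightarrow> complex vec \<Rightarrow> complex mat \<Rightarrow> nat \<Rightarrow> nat \<Rightarrow> nat \<Rightarrow>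
   (bool \<Rightarrow> complex mat) \<Rightarrow> (bool \<Rightarrow> bool list \<Rightarrow> bool \<Rightarrow> bool list \<Rightarrow> complex mat) \<Rightarrow> bool" where
  "strategy n dE chi U d0 d1 d' R Proj \<longleftrightarrow>
     chi \<in> carrier_vec dE \<and> cinner chi chi = 1 \<and>
     d0 * d1 * d' = 4 ^ n * dE \<and>
     unitary (4 ^ n * dE) U \<and>
     projective_measurement d' UNIV R \<and>
     (\<forall>i s b'. s \<in> bitstrings n \<longrightarrow>
        projective_measurement (if i then d1 else d0) (bitstrings n) (Proj i s b'))"

definition Phi :: "nat \<Rightarrow> complex vec \<Rightarrow> complex mat \<Rightarrow> bool list \<Rightarrow> bool list \<Rightarrow> bool list \<Rightarrow> complex vec" where
  "Phi n chi U s r0 r1 = U *\<^sub>v kron_vec (Psi n s r0 r1) chi"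

definition success_prob ::
  "nat \<Rightarrow> complex vec \<Rightarrow> complex mat \<Rightarrow>
   (bool \<Rightarrow> complex mat) \<Rightarrow> (bool \<Rightarrow> bool list \<Rightarrow> bool \<Rightarrow> bool list \<Rightarrow> complex mat) \<Rightarrow> complex" where
  "success_prob n chi U R Proj =
     (1 / 2 ^ (3 * n)) *
     (\<Sum>r0\<in>bitstrings n. \<Sum>r1\<in>bitstrings n. \<Sum>s\<in>bitstrings n. \<Sum>b'\<in>(UNIV :: bool set).
        let rb = (if b' then r1 else r0); rnb = (if b' then r0 else r1);
            \<Phi> = Phi n chi U s r0 r1
        in cinner \<Phi> (kron_mat (kron_mat (Proj False s b' rb) (Proj True s b' rnb)) (R b') *\<^sub>v \<Phi>))"

end

theory Submission
  imports Defs
begin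

text \<open>For an input \<open>j = (s, r\<^sub>0, r\<^sub>1)\<close> let \<open>\<Phi>\<^sub>j\<close> be Bob's state and \<open>u\<^sub>j\<^sub>b\<close> its image under
  the projection onto success after outcome \<open>b\<close> on \<open>B'\<close>, so that \<open>8\<^sup>n p\<^sub>n = T = \<Sum> |u\<^sub>j\<^sub>b|\<^sup>2\<close>.
  Expanding \<open>\<Phi>\<^sub>j\<close> in the unit vectors \<open>U(|x> \<otimes> \<chi>)\<close>, \<open>x < N = 4\<^sup>n\<close>, whose coefficients
  \<open><x|\<Psi>\<^sub>j>\<close> are real, Cauchy-Schwarz twice gives
  \<open>T\<^sup>2 \<le> N \<Sum> <\<Psi>\<^sub>j|\<Psi>\<^sub>j\<^sub>'> <u\<^sub>j\<^sub>b|u\<^sub>j\<^sub>'\<^sub>b\<^sub>'>\<close>. Terms with \<open>b \<noteq> b'\<close> vanish because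
  \<open>R\<^sup>0 R\<^sup>1 = 0\<close>. For fixed \<open>s, t, b\<close> the \<open>u\<^sub>j\<^sub>b\<close> lie in the ranges of the commuting
  projections \<open>\<Pi>\<^sup>e\<^sub>0 \<otimes> 1\<close> and \<open>1 \<otimes> \<Pi>\<^sup>f\<^sub>1\<close>; cutting the double sum into the corresponding
  blocks, only the norms of the blocks of the overlap matrix \<open><\<Psi>\<^sup>s|\<Psi>\<^sup>t>\<close> enter. Each block
  is a tensor product of qubit overlap matrices, of norm \<open>1\<close> where \<open>s\<close> and \<open>t\<close> agree and
  \<open>1/sqrt 2\<close> where they differ, so by AM-GM the double sum is at most \<open>(1 + 1/sqrt 2)\<^sup>n T\<close>.
  Hence \<open>T \<le> N (1 + 1/sqrt 2)\<^sup>n\<close>.\<close>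

section \<open>Vectors and orthogonal projections\<close>

definition sqnorm :: "complex vec \<Rightarrow> real" where
  "sqnorm v = (\<Sum>i<dim_vec v. (cmod (v $ i))\<^sup>2)"

lemma sqnorm_nonneg: "sqnorm v \<ge> 0"
  unfolding sqnorm_def by (simp add: sum_nonneg)

lemma cinner_self_eq_sqnorm: "cinner v v = of_real (sqnorm v)"
  unfolding cinner_def sqnorm_def
  by (simp add: complex_norm_square[symmetric] mult.commute)

lemma sum_cnj_mult_self: "(\<Sum>g\<in>G. cnj (z g) * z g) = of_real (\<Sum>g\<in>G. (cmod (z g))\<^sup>2)"
  by (simp add: complex_norm_square[symmetric] mult.commute)

lemma index_mult_mat_vec_sum:
  "A \<in> carrier_mat m k \<Longrightarrow> dim_vec v = k \<Longrightarrow> i < m \<Longrightarrow> (A *\<^sub>v v) $ i = (\<Sum>j<k. A $$ (i, j) * v $ j)"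
  by (auto simp: scalar_prod_def lessThan_atLeast0 intro!: sum.cong)

lemma mat_adjoint_carrier: "A \<in> carrier_mat m k \<Longrightarrow> mat_adjoint A \<in> carrier_mat k m"
  unfolding mat_adjoint_def by auto

lemma index_mat_adjoint:
  "A \<in> carrier_mat m k \<Longrightarrow> i < k \<Longrightarrow> j < m \<Longrightarrow> mat_adjoint A $$ (i, j) = cnj (A $$ (j, i))"
  unfolding mat_adjoint_def by (auto simp: mat_of_rows_index)

lemma mat_adjoint_mult:
  fixes A B :: "complex mat"
  assumes A: "A \<in> carrier_mat D D" and B: "B \<in> carrier_mat D D"
  shows "mat_adjoint (A * B) = mat_adjoint B * mat_adjoint A"
proof (rule eq_matI)
  fix i j assume "i < dim_row (mat_adjoint B * mat_adjoint A)" "j < dim_col (mat_adjoint B * mat_adjoint A)"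
  then have ij: "i < D" "j < D" using mat_adjoint_carrier[OF A] mat_adjoint_carrier[OF B] by auto
  have AB: "A * B \<in> carrier_mat D D" using A B by simp
  show "mat_adjoint (A * B) $$ (i, j) = (mat_adjoint B * mat_adjoint A) $$ (i, j)"
    using ij A B mat_adjoint_carrier[OF A] mat_adjoint_carrier[OF B]
    by (simp add: index_mat_adjoint[OF AB] index_mat_adjoint[OF A] index_mat_adjoint[OF B]
        scalar_prod_def sum_conjugate[symmetric, simplified] mult.commute)
qed (use A B mat_adjoint_carrier[OF A] mat_adjoint_carrier[OF B] mat_adjoint_carrier[of "A * B" D D] in auto)

lemma cinner_mult_mat_vec_left:
  assumes A: "A \<in> carrier_mat m k" and v: "dim_vec v = k" and w: "dim_vec w = m"
  shows "cinner (A *\<^sub>v v) w = cinner v (mat_adjoint A *\<^sub>v w)"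
proof -
  have "cinner (A *\<^sub>v v) w = (\<Sum>i<m. cnj (\<Sum>j<k. A $$ (i, j) * v $ j) * w $ i)"
    unfolding cinner_def using A
    by (intro sum.cong) (auto simp: index_mult_mat_vec_sum[OF A v] simp del: index_mult_mat_vec)
  also have "\<dots> = (\<Sum>j<k. \<Sum>i<m. cnj (v $ j) * (cnj (A $$ (i, j)) * w $ i))"
    by (subst sum.swap) (simp add: sum_distrib_right sum_distrib_left mult_ac)
  also have "\<dots> = (\<Sum>j<k. cnj (v $ j) * (\<Sum>i<m. mat_adjoint A $$ (j, i) * w $ i))"
    using A by (auto simp: sum_distrib_left index_mat_adjoint intro!: sum.cong)
  also have "\<dots> = cinner v (mat_adjoint A *\<^sub>v w)"
    unfolding cinner_def using A v w mat_adjoint_carrier[OF A]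
    by (intro sum.cong)
      (auto simp: index_mult_mat_vec_sum[OF mat_adjoint_carrier[OF A] w] simp del: index_mult_mat_vec)
  finally show ?thesis .
qed

lemma unitary_cinner:
  assumes U: "unitary D U" and v: "dim_vec v = D" and w: "dim_vec w = D"
  shows "cinner (U *\<^sub>v v) (U *\<^sub>v w) = cinner v w"
proof -
  have car: "U \<in> carrier_mat D D" and UU: "mat_adjoint U * U = 1\<^sub>m D"
    using U unfolding unitary_def by auto
  have "cinner (U *\<^sub>v v) (U *\<^sub>v w) = cinner v (mat_adjoint U *\<^sub>v (U *\<^sub>v w))"
    using cinner_mult_mat_vec_left[OF car v] car w by simp
  also have "mat_adjoint U *\<^sub>v (U *\<^sub>v w) = (mat_adjoint U * U) *\<^sub>v w"
    by (rule assoc_mult_mat_vec[OF mat_adjoint_carrier[OF car] car carrier_vecI[OF w], symmetric])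
  also have "\<dots> = w" unfolding UU by (rule one_mult_mat_vec[OF carrier_vecI[OF w]])
  finally show ?thesis .
qed

lemma sum_mult_le_sqrt_sum_squares:
  fixes a b :: "'i \<Rightarrow> real"
  shows "(\<Sum>i\<in>I. a i * b i) \<le> sqrt (\<Sum>i\<in>I. (a i)\<^sup>2) * sqrt (\<Sum>i\<in>I. (b i)\<^sup>2)"
proof -
  have CS: "(\<Sum>i\<in>I. a i * b i)\<^sup>2 \<le> (\<Sum>i\<in>I. (a i)\<^sup>2) * (\<Sum>i\<in>I. (b i)\<^sup>2)"
  proof (cases "finite I")
    case True
    have "0 \<le> (\<Sum>i\<in>I. \<Sum>j\<in>I. (a i * b j - a j * b i)\<^sup>2)" by (simp add: sum_nonneg)
    also have "\<dots> = (\<Sum>i\<in>I. \<Sum>j\<in>I. (a i)\<^sup>2 * (b j)\<^sup>2) + (\<Sum>i\<in>I. \<Sum>j\<in>I. (b i)\<^sup>2 * (a j)\<^sup>2)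
        - 2 * (\<Sum>i\<in>I. \<Sum>j\<in>I. (a i * b i) * (a j * b j))"
      by (simp add: power2_eq_square algebra_simps sum_subtractf sum.distrib sum_distrib_left)
    also have "\<dots> = 2 * ((\<Sum>i\<in>I. (a i)\<^sup>2) * (\<Sum>i\<in>I. (b i)\<^sup>2)) - 2 * (\<Sum>i\<in>I. a i * b i)\<^sup>2"
      unfolding sum_product[symmetric] power2_eq_square[of "sum _ _"] by simp
    finally show ?thesis by simp
  qed simp
  have "(\<Sum>i\<in>I. a i * b i) \<le> sqrt ((\<Sum>i\<in>I. a i * b i)\<^sup>2)" by simp
  also have "\<dots> \<le> sqrt ((\<Sum>i\<in>I. (a i)\<^sup>2) * (\<Sum>i\<in>I. (b i)\<^sup>2))"
    using CS by (rule real_sqrt_le_mono)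
  finally show ?thesis by (simp add: real_sqrt_mult)
qed

lemma sum_sqrt_mult_le:
  fixes a b :: "'i \<Rightarrow> real"
  assumes "\<And>i. a i \<ge> 0" "\<And>i. b i \<ge> 0"
  shows "(\<Sum>i\<in>I. sqrt (a i) * sqrt (b i)) \<le> sqrt (\<Sum>i\<in>I. a i) * sqrt (\<Sum>i\<in>I. b i)"
  using sum_mult_le_sqrt_sum_squares[of "\<lambda>i. sqrt (a i)" "\<lambda>i. sqrt (b i)" I] assms by simp

lemma cmod_sum_cnj_mult_le:
  fixes a b :: "'i \<Rightarrow> complex"
  shows "cmod (\<Sum>i\<in>I. cnj (a i) * b i) \<le> sqrt (\<Sum>i\<in>I. (cmod (a i))\<^sup>2) * sqrt (\<Sum>i\<in>I. (cmod (b i))\<^sup>2)"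
proof -
  have "cmod (\<Sum>i\<in>I. cnj (a i) * b i) \<le> (\<Sum>i\<in>I. cmod (a i) * cmod (b i))"
    by (rule order_trans[OF norm_sum]) (simp add: norm_mult)
  also have "\<dots> \<le> sqrt (\<Sum>i\<in>I. (cmod (a i))\<^sup>2) * sqrt (\<Sum>i\<in>I. (cmod (b i))\<^sup>2)"
    by (rule sum_mult_le_sqrt_sum_squares)
  finally show ?thesis .
qed

definition orth_proj :: "nat \<Rightarrow> complex mat \<Rightarrow> bool" where
  "orth_proj D P \<longleftrightarrow> P \<in> carrier_mat D D \<and> mat_adjoint P = P \<and> P * P = P"

lemma orth_proj_carrier: "orth_proj D P \<Longrightarrow> P \<in> carrier_mat D D"
  unfolding orth_proj_def by simp

lemma orth_proj_cinner_swap: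
  "orth_proj D P \<Longrightarrow> dim_vec v = D \<Longrightarrow> dim_vec w = D \<Longrightarrow> cinner (P *\<^sub>v v) w = cinner v (P *\<^sub>v w)"
  unfolding orth_proj_def using cinner_mult_mat_vec_left by metis

lemma orth_proj_mult_vec_idem: "orth_proj D P \<Longrightarrow> dim_vec v = D \<Longrightarrow> P *\<^sub>v (P *\<^sub>v v) = P *\<^sub>v v"
  unfolding orth_proj_def by (metis assoc_mult_mat_vec carrier_vecI)

lemma orth_proj_cinner_self:
  "orth_proj D P \<Longrightarrow> dim_vec v = D \<Longrightarrow> cinner (P *\<^sub>v v) (P *\<^sub>v v) = cinner v (P *\<^sub>v v)"
  using orth_proj_cinner_swap orth_proj_mult_vec_idem
  by (metis orth_proj_def carrier_matD(1) dim_mult_mat_vec)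

lemma sqnorm_orth_proj:
  "orth_proj D P \<Longrightarrow> dim_vec v = D \<Longrightarrow> sqnorm (P *\<^sub>v v) = Re (cinner v (P *\<^sub>v v))"
  using orth_proj_cinner_self[of D P v] cinner_self_eq_sqnorm[of "P *\<^sub>v v"] by (metis Re_complex_of_real)

lemma orth_proj_mult:
  assumes A: "orth_proj D A" and B: "orth_proj D B" and AB: "A * B = B * A"
  shows "orth_proj D (A * B)"
proof -
  have car: "A \<in> carrier_mat D D" "B \<in> carrier_mat D D" using A B by (simp_all add: orth_proj_carrier)
  have "A * B * (A * B) = A * ((B * A) * B)"
    using car by (simp add: assoc_mult_mat[of _ D D _ D _ D])
  also have "\<dots> = (A * A) * (B * B)"
    using car by (simp add: AB[symmetric] assoc_mult_mat[of _ D D _ D _ D])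
  also have "\<dots> = A * B" using A B unfolding orth_proj_def by simp
  finally show ?thesis
    using A B AB car mat_adjoint_mult[OF car] unfolding orth_proj_def by auto
qed

definition sum_to_id :: "nat \<Rightarrow> 'x set \<Rightarrow> ('x \<Rightarrow> complex mat) \<Rightarrow> bool" where
  "sum_to_id D I M \<longleftrightarrow> (\<forall>k<D. \<forall>l<D. (\<Sum>x\<in>I. M x $$ (k, l)) = 1\<^sub>m D $$ (k, l))"

lemma sum_to_id_cinner:
  assumes M: "sum_to_id D I M" "\<forall>x\<in>I. M x \<in> carrier_mat D D" and v: "dim_vec v = D"
  shows "(\<Sum>x\<in>I. cinner v (M x *\<^sub>v v)) = cinner v v"
proof -
  have "(\<Sum>x\<in>I. cinner v (M x *\<^sub>v v)) = (\<Sum>x\<in>I. \<Sum>k<D. \<Sum>l<D. cnj (v $ k) * (M x $$ (k, l) * v $ l))"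
    unfolding cinner_def using M(2) v
    by (intro sum.cong refl)
      (auto simp: index_mult_mat_vec_sum[of _ D D] sum_distrib_left simp del: index_mult_mat_vec)
  also have "\<dots> = (\<Sum>k<D. \<Sum>l<D. cnj (v $ k) * ((\<Sum>x\<in>I. M x $$ (k, l)) * v $ l))"
    by (simp add: sum.swap[of _ I] sum_distrib_left sum_distrib_right)
  also have "\<dots> = (\<Sum>k<D. \<Sum>l<D. cnj (v $ k) * (1\<^sub>m D $$ (k, l) * v $ l))"
    using M(1) unfolding sum_to_id_def by simp
  also have "\<dots> = (\<Sum>k<D. cnj (v $ k) * v $ k)"
  proof (intro sum.cong refl)
    fix k assume k: "k \<in> {..<D}"
    have "(\<Sum>l<D. cnj (v $ k) * (1\<^sub>m D $$ (k, l) * v $ l)) = (\<Sum>l<D. if l = k then cnj (v $ k) * v $ l else 0)"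
      using k by (intro sum.cong refl) auto
    then show "(\<Sum>l<D. cnj (v $ k) * (1\<^sub>m D $$ (k, l) * v $ l)) = cnj (v $ k) * v $ k"
      using k by simp
  qed
  also have "\<dots> = cinner v v" unfolding cinner_def using v by simp
  finally show ?thesis .
qed

lemma sum_sqnorm_sum_to_id:
  assumes M: "sum_to_id D I M" "\<forall>x\<in>I. orth_proj D (M x)" and v: "dim_vec v = D"
  shows "(\<Sum>x\<in>I. sqnorm (M x *\<^sub>v v)) = sqnorm v"
proof -
  have "(\<Sum>x\<in>I. sqnorm (M x *\<^sub>v v)) = (\<Sum>x\<in>I. Re (cinner v (M x *\<^sub>v v)))"
    using M(2) v sqnorm_orth_proj by (intro sum.cong refl) blast
  also have "\<dots> = sqnorm v"
    using sum_to_id_cinner[OF M(1) _ v] M(2)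
    by (simp add: orth_proj_carrier cinner_self_eq_sqnorm flip: Re_sum)
  finally show ?thesis .
qed

lemma projective_measurement_orth_proj:
  "projective_measurement d I P \<Longrightarrow> x \<in> I \<Longrightarrow> orth_proj d (P x)"
  unfolding projective_measurement_def orth_proj_def by auto

lemma projective_measurement_sum_to_id: "projective_measurement d I P \<Longrightarrow> sum_to_id d I P"
  unfolding projective_measurement_def sum_to_id_def by auto

lemma projective_measurement_bool_orthogonal:
  assumes pm: "projective_measurement d UNIV (R :: bool \<Rightarrow> complex mat)"
  shows "R b * R (\<not> b) = 0\<^sub>m d d"
proof -
  have car: "R b \<in> carrier_mat d d" "R (\<not> b) \<in> carrier_mat d d"
    using pm unfolding projective_measurement_def by auto
  have idem: "R b * R b = R b" using pm unfolding projective_measurement_def by auto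
  have "R (\<not> b) = 1\<^sub>m d - R b"
  proof (rule eq_matI)
    fix i j assume "i < dim_row (1\<^sub>m d - R b)" "j < dim_col (1\<^sub>m d - R b)"
    then have ij: "i < d" "j < d" using car by auto
    have "R False $$ (i, j) + R True $$ (i, j) = 1\<^sub>m d $$ (i, j)"
      using pm ij unfolding projective_measurement_def by (simp add: UNIV_bool del: index_one_mat)
    then show "R (\<not> b) $$ (i, j) = (1\<^sub>m d - R b) $$ (i, j)"
      using ij car by (cases b) (auto simp: algebra_simps)
  qed (use car in auto)
  then have "R b * R (\<not> b) = R b * 1\<^sub>m d - R b * R b"
    using car mult_minus_distrib_mat[of "R b" d d "1\<^sub>m d" d "R b"] by simp
  also have "\<dots> = 0\<^sub>m d d" using car idem by simp
  finally show ?thesis .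
qed

section \<open>Kronecker products\<close>

lemma sum_lessThan_mult: "(\<Sum>l<(a::nat) * b. f l) = (\<Sum>i<a. \<Sum>j<b. f (i * b + j))"
proof -
  have "(\<Sum>l<a * b. f l) = (\<Sum>i<a. sum f {i * b..<i * b + b})"
    using sum.nat_group[of f b a] by simp
  also have "\<dots> = (\<Sum>i<a. \<Sum>j<b. f (i * b + j))"
  proof (rule sum.cong[OF refl])
    fix i
    have "sum f {i * b..<i * b + b} = sum (f \<circ> plus (i * b)) {0..<b}"
      using sum.atLeastLessThan_shift_0[of f "i * b" "i * b + b"] by simp
    then show "sum f {i * b..<i * b + b} = (\<Sum>j<b. f (i * b + j))" by (simp add: lessThan_atLeast0)
  qed
  finally show ?thesis .
qed

lemma mult_add_div_eq [simp]: "j < b \<Longrightarrow> (i * b + j) div b = (i::nat)"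
  and mult_add_mod_eq [simp]: "j < b \<Longrightarrow> (i * b + j) mod b = (j::nat)"
  by (simp_all add: add.commute[of "i * b"])

lemma mult_add_less_mult: "i < a \<Longrightarrow> j < (b::nat) \<Longrightarrow> i * b + j < a * b"
proof -
  assume "i < a" "j < b"
  then have "i * b + j < Suc i * b" by simp
  also have "\<dots> \<le> a * b" using \<open>i < a\<close> by (intro mult_le_mono1) simp
  finally show ?thesis .
qed

lemma div_less_of_less_mult: "l < a * (b::nat) \<Longrightarrow> l div b < a"
  by (simp add: less_mult_imp_div_less)

lemma mod_less_of_less_mult: "l < a * (b::nat) \<Longrightarrow> l mod b < b"
  by (cases "b = 0") auto

lemma dim_kron_vec [simp]: "dim_vec (kron_vec v w) = dim_vec v * dim_vec w"
  unfolding kron_vec_def by simp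

lemma index_kron_vec:
  "l < dim_vec v * dim_vec w \<Longrightarrow> kron_vec v w $ l = v $ (l div dim_vec w) * w $ (l mod dim_vec w)"
  unfolding kron_vec_def by simp

lemma cinner_kron_vec:
  assumes "dim_vec v' = dim_vec v" "dim_vec w' = dim_vec w"
  shows "cinner (kron_vec v w) (kron_vec v' w') = cinner v v' * cinner w w'"
proof -
  have "cinner (kron_vec v w) (kron_vec v' w')
      = (\<Sum>i<dim_vec v. \<Sum>j<dim_vec w. cnj (v $ i * w $ j) * (v' $ i * w' $ j))"
    unfolding cinner_def dim_kron_vec sum_lessThan_mult using assms
    by (intro sum.cong refl) (simp add: index_kron_vec mult_add_less_mult)
  also have "\<dots> = cinner v v' * cinner w w'"
    unfolding cinner_def using assms by (simp add: sum_product mult_ac)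
  finally show ?thesis .
qed

lemma dim_kron_mat [simp]:
  "dim_row (kron_mat A B) = dim_row A * dim_row B"
  "dim_col (kron_mat A B) = dim_col A * dim_col B"
  unfolding kron_mat_def by auto

lemma kron_mat_carrier:
  "A \<in> carrier_mat a1 a2 \<Longrightarrow> B \<in> carrier_mat b1 b2 \<Longrightarrow> kron_mat A B \<in> carrier_mat (a1 * b1) (a2 * b2)"
  by auto

lemma index_kron_mat:
  "i < dim_row A * dim_row B \<Longrightarrow> j < dim_col A * dim_col B \<Longrightarrow>
   kron_mat A B $$ (i, j) = A $$ (i div dim_row B, j div dim_col B) * B $$ (i mod dim_row B, j mod dim_col B)"
  unfolding kron_mat_def by simp

lemma kron_mat_mult:
  assumes A: "A \<in> carrier_mat m k" and C: "C \<in> carrier_mat k p"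
    and B: "B \<in> carrier_mat m' k'" and D: "D \<in> carrier_mat k' p'"
  shows "kron_mat A B * kron_mat C D = kron_mat (A * C) (B * D)"
proof (rule eq_matI)
  fix i j assume "i < dim_row (kron_mat (A * C) (B * D))" "j < dim_col (kron_mat (A * C) (B * D))"
  then have i: "i < m * m'" and j: "j < p * p'" using A B C D by auto
  have "(kron_mat A B * kron_mat C D) $$ (i, j) = (\<Sum>l<k * k'. kron_mat A B $$ (i, l) * kron_mat C D $$ (l, j))"
    using i j A B C D by (simp add: scalar_prod_def lessThan_atLeast0)
  also have "\<dots> = (\<Sum>a<k. \<Sum>b<k'. (A $$ (i div m', a) * C $$ (a, j div p')) * (B $$ (i mod m', b) * D $$ (b, j mod p')))"
    unfolding sum_lessThan_mult using i j A B C D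
    by (intro sum.cong refl) (simp add: index_kron_mat mult_add_less_mult)
  also have "\<dots> = kron_mat (A * C) (B * D) $$ (i, j)"
    using i j A B C D div_less_of_less_mult[OF i] div_less_of_less_mult[OF j]
      mod_less_of_less_mult[OF i] mod_less_of_less_mult[OF j]
    by (simp add: index_kron_mat scalar_prod_def lessThan_atLeast0 sum_product)
  finally show "(kron_mat A B * kron_mat C D) $$ (i, j) = kron_mat (A * C) (B * D) $$ (i, j)" .
qed (use A B C D in auto)

lemma mat_adjoint_kron_mat:
  assumes A: "A \<in> carrier_mat a1 a2" and B: "B \<in> carrier_mat b1 b2"
  shows "mat_adjoint (kron_mat A B) = kron_mat (mat_adjoint A) (mat_adjoint B)"
proof (rule eq_matI)
  note AB = kron_mat_carrier[OF A B] and adj = mat_adjoint_carrier[OF A] mat_adjoint_carrier[OF B]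
  fix i j assume "i < dim_row (kron_mat (mat_adjoint A) (mat_adjoint B))"
    "j < dim_col (kron_mat (mat_adjoint A) (mat_adjoint B))"
  then have i: "i < a2 * b2" and j: "j < a1 * b1" using adj by auto
  show "mat_adjoint (kron_mat A B) $$ (i, j) = kron_mat (mat_adjoint A) (mat_adjoint B) $$ (i, j)"
    using i j A B adj div_less_of_less_mult[OF i] div_less_of_less_mult[OF j]
      mod_less_of_less_mult[OF i] mod_less_of_less_mult[OF j]
    by (simp add: index_mat_adjoint[OF AB] index_kron_mat index_mat_adjoint[OF A] index_mat_adjoint[OF B])
qed (use mat_adjoint_carrier[OF A] mat_adjoint_carrier[OF B] mat_adjoint_carrier[OF kron_mat_carrier[OF A B]] in auto)

lemma kron_mat_one: "kron_mat (1\<^sub>m a) (1\<^sub>m b) = 1\<^sub>m (a * b)"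
proof (rule eq_matI)
  fix i j assume "i < dim_row (1\<^sub>m (a * b))" "j < dim_col (1\<^sub>m (a * b))"
  then have i: "i < a * b" and j: "j < a * b" by auto
  show "kron_mat (1\<^sub>m a) (1\<^sub>m b) $$ (i, j) = 1\<^sub>m (a * b) $$ (i, j)"
    using i j div_less_of_less_mult[OF i] div_less_of_less_mult[OF j]
      mod_less_of_less_mult[OF i] mod_less_of_less_mult[OF j]
    by (auto simp: index_kron_mat) (metis div_mult_mod_eq)
qed auto

lemma orth_proj_kron_mat: "orth_proj a A \<Longrightarrow> orth_proj b B \<Longrightarrow> orth_proj (a * b) (kron_mat A B)"
  unfolding orth_proj_def using kron_mat_mult[of A a a A a B b b B b] mat_adjoint_kron_mat[of A a a B b b]
  by auto

lemma orth_proj_one: "orth_proj a (1\<^sub>m a)"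
proof -
  have "mat_adjoint (1\<^sub>m a) = (1\<^sub>m a :: complex mat)"
    using mat_adjoint_carrier[of "1\<^sub>m a :: complex mat" a a]
    by (intro eq_matI) (auto simp: index_mat_adjoint[of _ a a])
  then show ?thesis unfolding orth_proj_def by simp
qed

lemma sum_to_id_kron_mat_one_right:
  assumes M: "sum_to_id a I M" "\<forall>x\<in>I. M x \<in> carrier_mat a a"
  shows "sum_to_id (a * b) I (\<lambda>x. kron_mat (M x) (1\<^sub>m b))"
  unfolding sum_to_id_def
proof (intro allI impI)
  fix k l assume k: "k < a * b" and l: "l < a * b"
  have "(\<Sum>x\<in>I. kron_mat (M x) (1\<^sub>m b) $$ (k, l)) = (\<Sum>x\<in>I. M x $$ (k div b, l div b)) * 1\<^sub>m b $$ (k mod b, l mod b)"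
    unfolding sum_distrib_right using M(2) k l by (intro sum.cong refl) (auto simp: index_kron_mat)
  also have "\<dots> = kron_mat (1\<^sub>m a) (1\<^sub>m b) $$ (k, l)"
    using M(1) k l div_less_of_less_mult[OF k] div_less_of_less_mult[OF l]
    unfolding sum_to_id_def by (simp add: index_kron_mat)
  finally show "(\<Sum>x\<in>I. kron_mat (M x) (1\<^sub>m b) $$ (k, l)) = 1\<^sub>m (a * b) $$ (k, l)"
    by (simp add: kron_mat_one)
qed

lemma sum_to_id_kron_mat_one_left:
  assumes M: "sum_to_id b I M" "\<forall>x\<in>I. M x \<in> carrier_mat b b"
  shows "sum_to_id (a * b) I (\<lambda>x. kron_mat (1\<^sub>m a) (M x))"
  unfolding sum_to_id_def
proof (intro allI impI)
  fix k l assume k: "k < a * b" and l: "l < a * b"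
  have "(\<Sum>x\<in>I. kron_mat (1\<^sub>m a) (M x) $$ (k, l)) = 1\<^sub>m a $$ (k div b, l div b) * (\<Sum>x\<in>I. M x $$ (k mod b, l mod b))"
    unfolding sum_distrib_left using M(2) k l by (intro sum.cong refl) (auto simp: index_kron_mat)
  also have "\<dots> = kron_mat (1\<^sub>m a) (1\<^sub>m b) $$ (k, l)"
    using M(1) k l mod_less_of_less_mult[OF k] mod_less_of_less_mult[OF l]
    unfolding sum_to_id_def by (simp add: index_kron_mat)
  finally show "(\<Sum>x\<in>I. kron_mat (1\<^sub>m a) (M x) $$ (k, l)) = 1\<^sub>m (a * b) $$ (k, l)"
    by (simp add: kron_mat_one)
qed

section \<open>Operators acting on one factor of \<open>B\<^sub>0 B\<^sub>1 B'\<close>\<close>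

definition on_B0 :: "nat \<Rightarrow> nat \<Rightarrow> complex mat \<Rightarrow> complex mat" where
  "on_B0 d1 d' A = kron_mat (kron_mat A (1\<^sub>m d1)) (1\<^sub>m d')"

definition on_B1 :: "nat \<Rightarrow> nat \<Rightarrow> complex mat \<Rightarrow> complex mat" where
  "on_B1 d0 d' B = kron_mat (kron_mat (1\<^sub>m d0) B) (1\<^sub>m d')"

definition on_B' :: "nat \<Rightarrow> nat \<Rightarrow> complex mat \<Rightarrow> complex mat" where
  "on_B' d0 d1 C = kron_mat (kron_mat (1\<^sub>m d0) (1\<^sub>m d1)) C"

lemma on_B0_carrier: "A \<in> carrier_mat d0 d0 \<Longrightarrow> on_B0 d1 d' A \<in> carrier_mat (d0 * d1 * d') (d0 * d1 * d')"
  and on_B1_carrier: "B \<in> carrier_mat d1 d1 \<Longrightarrow> on_B1 d0 d' B \<in> carrier_mat (d0 * d1 * d') (d0 * d1 * d')"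
  and on_B'_carrier: "C \<in> carrier_mat d' d' \<Longrightarrow> on_B' d0 d1 C \<in> carrier_mat (d0 * d1 * d') (d0 * d1 * d')"
  unfolding on_B0_def on_B1_def on_B'_def by auto

lemma on_B0_mult_kron_mat:
  "A \<in> carrier_mat d0 d0 \<Longrightarrow> A' \<in> carrier_mat d0 d0 \<Longrightarrow> B \<in> carrier_mat d1 d1 \<Longrightarrow> C \<in> carrier_mat d' d' \<Longrightarrow>
   on_B0 d1 d' A * kron_mat (kron_mat A' B) C = kron_mat (kron_mat (A * A') B) C"
  unfolding on_B0_def by (subst kron_mat_mult[of _ "d0 * d1" "d0 * d1" _ "d0 * d1" _ d' d' _ d'])
    (auto intro!: kron_mat_carrier simp: kron_mat_mult[of _ d0 d0 _ d0 _ d1 d1 _ d1])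

lemma on_B1_mult_kron_mat:
  "A \<in> carrier_mat d0 d0 \<Longrightarrow> B' \<in> carrier_mat d1 d1 \<Longrightarrow> B \<in> carrier_mat d1 d1 \<Longrightarrow> C \<in> carrier_mat d' d' \<Longrightarrow>
   on_B1 d0 d' B' * kron_mat (kron_mat A B) C = kron_mat (kron_mat A (B' * B)) C"
  unfolding on_B1_def by (subst kron_mat_mult[of _ "d0 * d1" "d0 * d1" _ "d0 * d1" _ d' d' _ d'])
    (auto intro!: kron_mat_carrier simp: kron_mat_mult[of _ d0 d0 _ d0 _ d1 d1 _ d1])

lemma on_B'_mult_kron_mat:
  "A \<in> carrier_mat d0 d0 \<Longrightarrow> B \<in> carrier_mat d1 d1 \<Longrightarrow> C' \<in> carrier_mat d' d' \<Longrightarrow> C \<in> carrier_mat d' d' \<Longrightarrow>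
   on_B' d0 d1 C' * kron_mat (kron_mat A B) C = kron_mat (kron_mat A B) (C' * C)"
  unfolding on_B'_def by (subst kron_mat_mult[of _ "d0 * d1" "d0 * d1" _ "d0 * d1" _ d' d' _ d'])
    (auto intro!: kron_mat_carrier simp: kron_mat_mult[of _ d0 d0 _ d0 _ d1 d1 _ d1])

lemma on_B0_on_B1_commute:
  "A \<in> carrier_mat d0 d0 \<Longrightarrow> B \<in> carrier_mat d1 d1 \<Longrightarrow> on_B0 d1 d' A * on_B1 d0 d' B = on_B1 d0 d' B * on_B0 d1 d' A"
  unfolding on_B0_def on_B1_def
  by (subst (1 2) kron_mat_mult[of _ "d0 * d1" "d0 * d1" _ "d0 * d1" _ d' d' _ d'])
    (auto intro!: kron_mat_carrier simp: kron_mat_mult[of _ d0 d0 _ d0 _ d1 d1 _ d1])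

lemma on_B'_mult: "C \<in> carrier_mat d' d' \<Longrightarrow> C' \<in> carrier_mat d' d' \<Longrightarrow> on_B' d0 d1 C * on_B' d0 d1 C' = on_B' d0 d1 (C * C')"
  unfolding on_B'_def by (subst kron_mat_mult[of _ "d0 * d1" "d0 * d1" _ "d0 * d1" _ d' d' _ d'])
    (auto intro!: kron_mat_carrier simp: kron_mat_one)

lemma on_B'_zero: "on_B' d0 d1 (0\<^sub>m d' d') = 0\<^sub>m (d0 * d1 * d') (d0 * d1 * d')"
  unfolding on_B'_def by (rule eq_matI) (auto simp: index_kron_mat mod_less_of_less_mult)

lemma orth_proj_on_B0: "orth_proj d0 A \<Longrightarrow> orth_proj (d0 * d1 * d') (on_B0 d1 d' A)"
  and orth_proj_on_B1: "orth_proj d1 B \<Longrightarrow> orth_proj (d0 * d1 * d') (on_B1 d0 d' B)"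
  and orth_proj_on_B': "orth_proj d' C \<Longrightarrow> orth_proj (d0 * d1 * d') (on_B' d0 d1 C)"
  unfolding on_B0_def on_B1_def on_B'_def by (intro orth_proj_kron_mat orth_proj_one; assumption)+

lemma sum_to_id_on_B0:
  "sum_to_id d0 I P \<Longrightarrow> \<forall>x\<in>I. P x \<in> carrier_mat d0 d0 \<Longrightarrow> sum_to_id (d0 * d1 * d') I (\<lambda>x. on_B0 d1 d' (P x))"
  unfolding on_B0_def
  by (rule sum_to_id_kron_mat_one_right[OF sum_to_id_kron_mat_one_right]) (auto intro!: kron_mat_carrier)

lemma sum_to_id_on_B1:
  "sum_to_id d1 I P \<Longrightarrow> \<forall>x\<in>I. P x \<in> carrier_mat d1 d1 \<Longrightarrow> sum_to_id (d0 * d1 * d') I (\<lambda>x. on_B1 d0 d' (P x))"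
  unfolding on_B1_def
  by (rule sum_to_id_kron_mat_one_right[OF sum_to_id_kron_mat_one_left]) (auto intro!: kron_mat_carrier)

section \<open>The states \<open>\<psi>\<close> and \<open>\<Psi>\<close>\<close>

definition bit_sign :: "bool \<Rightarrow> complex" where
  "bit_sign b = (if b then -1 else 1)"

lemma cmod_bit_sign [simp]: "cmod (bit_sign b) = 1"
  unfolding bit_sign_def by simp

lemma sum_lessThan_2: "(\<Sum>i<(2::nat). f i) = f 0 + f 1"
  by (simp add: numeral_2_eq_2)

lemma dim_ket [simp]: "dim_vec (ket b) = 2"
  and dim_ket_hat [simp]: "dim_vec (ket_hat b) = 2"
  and dim_psi [simp]: "dim_vec (psi s x y) = 4"
  unfolding ket_def ket_hat_def psi_def by simp_all

lemma cinner_ket_ket: "cinner (ket x) (ket y) = (if x = y then 1 else 0)"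
  unfolding cinner_def ket_def by (cases x; cases y) (simp_all add: sum_lessThan_2)

lemma cinner_ket_hat_ket_hat: "cinner (ket_hat x) (ket_hat y) = (if x = y then 1 else 0)"
proof -
  have "cinner (ket_hat x) (ket_hat y) = (1 + bit_sign x * bit_sign y) / (of_real (sqrt 2) * of_real (sqrt 2))"
    unfolding cinner_def ket_hat_def bit_sign_def by (cases x; cases y) (simp_all add: sum_lessThan_2 add_divide_distrib)
  also have "\<dots> = (1 + bit_sign x * bit_sign y) / 2" by (simp flip: of_real_mult)
  finally show ?thesis by (cases x; cases y) (simp_all add: bit_sign_def)
qed

lemma cinner_ket_ket_hat: "cinner (ket x) (ket_hat y) = bit_sign (x \<and> y) / of_real (sqrt 2)"
  and cinner_ket_hat_ket: "cinner (ket_hat y) (ket x) = bit_sign (x \<and> y) / of_real (sqrt 2)"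
  unfolding cinner_def ket_def ket_hat_def bit_sign_def by (cases x; cases y; simp add: sum_lessThan_2)+

lemma cinner_psi:
  "cinner (psi s x y) (psi s' x' y') =
   (if s = s' then (if x = x' \<and> y = y' then 1 else 0) else bit_sign (x \<and> y') * bit_sign (y \<and> x') / 2)"
  unfolding psi_def
  by (cases s; cases s')
    (auto simp: cinner_kron_vec cinner_ket_ket cinner_ket_hat_ket_hat cinner_ket_ket_hat cinner_ket_hat_ket
      field_simps bit_sign_def simp flip: of_real_mult)

lemma upt_Suc_Cons: "[0..<Suc n] = 0 # map Suc [0..<n]"
  by (simp only: upt_conv_Cons[of 0 "Suc n"] zero_less_Suc map_Suc_upt)

lemma Psi_0: "Psi 0 s r0 r1 = vec 1 (\<lambda>_. 1)"
  unfolding Psi_def by simp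

lemma Psi_Cons: "Psi (Suc n) (a # s) (x # r0) (y # r1) = kron_vec (psi a x y) (Psi n s r0 r1)"
  unfolding Psi_def upt_Suc_Cons by (simp add: comp_def)

lemma dim_kron_vec_list_map_upt:
  "(\<And>j. dim_vec (F j) = 4) \<Longrightarrow> dim_vec (kron_vec_list (map F [0..<n])) = 4 ^ n"
proof (induction n arbitrary: F)
  case (Suc n)
  have "map F [0..<Suc n] = F 0 # map (F \<circ> Suc) [0..<n]"
    unfolding upt_Suc_Cons by simp
  then show ?case using Suc.IH[of "F \<circ> Suc"] Suc.prems by (simp add: comp_def del: upt_Suc)
qed simp

lemma dim_Psi [simp]: "dim_vec (Psi n s r0 r1) = 4 ^ n"
  unfolding Psi_def by (rule dim_kron_vec_list_map_upt) simp

definition real_vec :: "complex vec \<Rightarrow> bool" where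
  "real_vec v \<longleftrightarrow> (\<forall>i<dim_vec v. cnj (v $ i) = v $ i)"

lemma real_vec_kron_vec: "real_vec v \<Longrightarrow> real_vec w \<Longrightarrow> real_vec (kron_vec v w)"
  unfolding real_vec_def by (auto simp: index_kron_vec div_less_of_less_mult mod_less_of_less_mult)

lemma real_vec_kron_vec_list: "(\<And>v. v \<in> set vs \<Longrightarrow> real_vec v) \<Longrightarrow> real_vec (kron_vec_list vs)"
  by (induction vs) (auto simp: real_vec_kron_vec, simp add: real_vec_def)

lemma real_vec_psi: "real_vec (psi s x y)"
  unfolding psi_def real_vec_def ket_def ket_hat_def by (auto simp: index_kron_vec)

lemma real_vec_Psi: "real_vec (Psi n s r0 r1)"
  unfolding Psi_def by (rule real_vec_kron_vec_list) (auto simp: real_vec_psi)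

lemma bitstrings_0: "bitstrings 0 = {[]}"
  unfolding bitstrings_def by auto

lemma bitstrings_Suc: "bitstrings (Suc n) = (\<lambda>(a, g). a # g) ` (UNIV \<times> bitstrings n)"
  unfolding bitstrings_def by (auto simp: image_iff length_Suc_conv)

lemma finite_bitstrings [simp]: "finite (bitstrings n)"
  by (induction n) (simp_all add: bitstrings_0 bitstrings_Suc)

lemma sum_bitstrings_Suc: "sum f (bitstrings (Suc n)) = (\<Sum>a\<in>UNIV. \<Sum>g\<in>bitstrings n. f (a # g))"
  unfolding bitstrings_Suc by (subst sum.reindex) (auto simp: inj_on_def sum.cartesian_product split_def)

lemma sum_UNIV_bool: "(\<Sum>b\<in>(UNIV::bool set). f b) = f False + f True"
  by (simp add: UNIV_bool)

section \<open>Norms of overlap matrices\<close>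

definition op_norm_le :: "'g set \<Rightarrow> 'h set \<Rightarrow> ('g \<Rightarrow> 'h \<Rightarrow> complex) \<Rightarrow> real \<Rightarrow> bool" where
  "op_norm_le G H K \<kappa> \<longleftrightarrow> (\<forall>\<alpha> \<beta>. cmod (\<Sum>g\<in>G. \<Sum>h\<in>H. cnj (\<alpha> g) * K g h * \<beta> h)
      \<le> \<kappa> * sqrt (\<Sum>g\<in>G. (cmod (\<alpha> g))\<^sup>2) * sqrt (\<Sum>h\<in>H. (cmod (\<beta> h))\<^sup>2))"

lemma op_norm_le_cong:
  "op_norm_le G H K \<kappa> \<Longrightarrow> (\<And>g h. g \<in> G \<Longrightarrow> h \<in> H \<Longrightarrow> K g h = K' g h) \<Longrightarrow> op_norm_le G H K' \<kappa>"
proof -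
  assume K: "op_norm_le G H K \<kappa>" and eq: "\<And>g h. g \<in> G \<Longrightarrow> h \<in> H \<Longrightarrow> K g h = K' g h"
  have "(\<Sum>g\<in>G. \<Sum>h\<in>H. cnj (\<alpha> g) * K g h * \<beta> h) = (\<Sum>g\<in>G. \<Sum>h\<in>H. cnj (\<alpha> g) * K' g h * \<beta> h)"
    for \<alpha> \<beta> using eq by (intro sum.cong refl) auto
  then show ?thesis using K unfolding op_norm_le_def by simp
qed

lemma op_norm_le_reindex:
  assumes K: "op_norm_le G' H' (\<lambda>g h. K (p g) (q h)) \<kappa>" and p: "bij_betw p G' G" and q: "bij_betw q H' H"
  shows "op_norm_le G H K \<kappa>"
  unfolding op_norm_le_def
proof (intro allI)
  fix \<alpha> \<beta>
  have "(\<Sum>g\<in>G'. \<Sum>h\<in>H'. cnj (\<alpha> (p g)) * K (p g) (q h) * \<beta> (q h))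
      = (\<Sum>g\<in>G'. \<Sum>h\<in>H. cnj (\<alpha> (p g)) * K (p g) h * \<beta> h)"
    by (intro sum.cong refl) (rule sum.reindex_bij_betw[OF q])
  also have "\<dots> = (\<Sum>g\<in>G. \<Sum>h\<in>H. cnj (\<alpha> g) * K g h * \<beta> h)"
    by (rule sum.reindex_bij_betw[OF p])
  finally have "(\<Sum>g\<in>G'. \<Sum>h\<in>H'. cnj (\<alpha> (p g)) * K (p g) (q h) * \<beta> (q h))
      = (\<Sum>g\<in>G. \<Sum>h\<in>H. cnj (\<alpha> g) * K g h * \<beta> h)" .
  moreover have "(\<Sum>g\<in>G'. (cmod (\<alpha> (p g)))\<^sup>2) = (\<Sum>g\<in>G. (cmod (\<alpha> g))\<^sup>2)"
    and "(\<Sum>h\<in>H'. (cmod (\<beta> (q h)))\<^sup>2) = (\<Sum>h\<in>H. (cmod (\<beta> h))\<^sup>2)"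
    using sum.reindex_bij_betw[OF p] sum.reindex_bij_betw[OF q] by simp_all
  ultimately show "cmod (\<Sum>g\<in>G. \<Sum>h\<in>H. cnj (\<alpha> g) * K g h * \<beta> h)
      \<le> \<kappa> * sqrt (\<Sum>g\<in>G. (cmod (\<alpha> g))\<^sup>2) * sqrt (\<Sum>h\<in>H. (cmod (\<beta> h))\<^sup>2)"
    using K[unfolded op_norm_le_def, rule_format, of "\<lambda>g. \<alpha> (p g)" "\<lambda>h. \<beta> (q h)"] by simp
qed

lemma op_norm_le_sum_sqnorm:
  assumes K: "op_norm_le G H K \<kappa>" and "\<kappa> \<ge> 0"
  shows "(\<Sum>g\<in>G. (cmod (\<Sum>h\<in>H. K g h * \<beta> h))\<^sup>2) \<le> \<kappa>\<^sup>2 * (\<Sum>h\<in>H. (cmod (\<beta> h))\<^sup>2)"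
proof -
  define z where "z g = (\<Sum>h\<in>H. K g h * \<beta> h)" for g
  define N where "N = (\<Sum>g\<in>G. (cmod (z g))\<^sup>2)"
  define B where "B = (\<Sum>h\<in>H. (cmod (\<beta> h))\<^sup>2)"
  have "N \<ge> 0" "B \<ge> 0" unfolding N_def B_def by (simp_all add: sum_nonneg)
  have "(\<Sum>g\<in>G. \<Sum>h\<in>H. cnj (z g) * K g h * \<beta> h) = of_real N"
    unfolding N_def sum_cnj_mult_self[symmetric] z_def by (simp add: sum_distrib_left mult.assoc)
  moreover have "cmod (\<Sum>g\<in>G. \<Sum>h\<in>H. cnj (z g) * K g h * \<beta> h) \<le> \<kappa> * sqrt N * sqrt B"
    using K unfolding op_norm_le_def N_def B_def by blast
  ultimately have NB: "N \<le> \<kappa> * sqrt N * sqrt B" using \<open>N \<ge> 0\<close> by simp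
  have "N \<le> \<kappa>\<^sup>2 * B"
  proof (cases "N = 0")
    case True then show ?thesis using \<open>\<kappa> \<ge> 0\<close> \<open>B \<ge> 0\<close> by simp
  next
    case False
    then have "sqrt N > 0" using \<open>N \<ge> 0\<close> by simp
    have "sqrt N * sqrt N \<le> (\<kappa> * sqrt B) * sqrt N" using NB \<open>N \<ge> 0\<close> by (simp add: mult_ac)
    then have "sqrt N \<le> \<kappa> * sqrt B" using \<open>sqrt N > 0\<close> by (rule mult_right_le_imp_le)
    then have "(sqrt N)\<^sup>2 \<le> (\<kappa> * sqrt B)\<^sup>2" using \<open>N \<ge> 0\<close> by (intro power_mono) auto
    then show ?thesis using \<open>N \<ge> 0\<close> \<open>B \<ge> 0\<close> by (simp add: power_mult_distrib)
  qed
  then show ?thesis unfolding N_def B_def z_def .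
qed

lemma op_norm_le_tensor:
  fixes A :: "'a set" and B :: "'b set" and G :: "'g set" and H :: "'h set"
  assumes "finite A" "finite B" "finite G" "finite H"
    and k: "op_norm_le A B k \<kappa>1" and K: "op_norm_le G H K \<kappa>2" and "\<kappa>1 \<ge> 0" and "\<kappa>2 \<ge> 0"
  shows "op_norm_le (A \<times> G) (B \<times> H) (\<lambda>(a, g) (b, h). k a b * K g h) (\<kappa>1 * \<kappa>2)"
  unfolding op_norm_le_def
proof (intro allI)
  fix \<alpha> :: "'a \<times> 'g \<Rightarrow> complex" and \<beta> :: "'b \<times> 'h \<Rightarrow> complex"
  define z where "z b g = (\<Sum>h\<in>H. K g h * \<beta> (b, h))" for b g
  define na where "na g = (\<Sum>a\<in>A. (cmod (\<alpha> (a, g)))\<^sup>2)" for g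
  define nz where "nz g = (\<Sum>b\<in>B. (cmod (z b g))\<^sup>2)" for g
  have "(\<Sum>x\<in>A \<times> G. \<Sum>y\<in>B \<times> H. cnj (\<alpha> x) * (case x of (a, g) \<Rightarrow> \<lambda>(b, h). k a b * K g h) y * \<beta> y)
      = (\<Sum>a\<in>A. \<Sum>g\<in>G. \<Sum>b\<in>B. \<Sum>h\<in>H. cnj (\<alpha> (a, g)) * (k a b * K g h) * \<beta> (b, h))"
    by (simp only: sum.cartesian_product' prod.case)
  also have "\<dots> = (\<Sum>g\<in>G. \<Sum>a\<in>A. \<Sum>b\<in>B. \<Sum>h\<in>H. cnj (\<alpha> (a, g)) * (k a b * K g h) * \<beta> (b, h))"
    by (rule sum.swap)
  also have "\<dots> = (\<Sum>g\<in>G. \<Sum>a\<in>A. \<Sum>b\<in>B. cnj (\<alpha> (a, g)) * k a b * z b g)"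
    unfolding z_def sum_distrib_left by (intro sum.cong refl) (simp only: mult.assoc)
  also have "cmod \<dots> \<le> (\<Sum>g\<in>G. \<kappa>1 * (sqrt (na g) * sqrt (nz g)))"
    unfolding na_def nz_def
    by (rule order_trans[OF norm_sum sum_mono])
      (use k[unfolded op_norm_le_def] in \<open>simp only: mult.assoc\<close>)
  also have "\<dots> \<le> \<kappa>1 * (sqrt (\<Sum>g\<in>G. na g) * sqrt (\<Sum>g\<in>G. nz g))"
    unfolding sum_distrib_left[symmetric] na_def nz_def
    by (intro mult_left_mono sum_sqrt_mult_le) (simp_all add: sum_nonneg \<open>\<kappa>1 \<ge> 0\<close>)
  also have "\<dots> \<le> \<kappa>1 * (sqrt (\<Sum>g\<in>G. na g) * (\<kappa>2 * sqrt (\<Sum>y\<in>B \<times> H. (cmod (\<beta> y))\<^sup>2)))"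
  proof -
    have "(\<Sum>g\<in>G. nz g) = (\<Sum>b\<in>B. \<Sum>g\<in>G. (cmod (z b g))\<^sup>2)"
      unfolding nz_def by (rule sum.swap)
    also have "\<dots> \<le> (\<Sum>b\<in>B. \<kappa>2\<^sup>2 * (\<Sum>h\<in>H. (cmod (\<beta> (b, h)))\<^sup>2))"
      unfolding z_def by (intro sum_mono op_norm_le_sum_sqnorm[OF K \<open>\<kappa>2 \<ge> 0\<close>])
    also have "\<dots> = \<kappa>2\<^sup>2 * (\<Sum>y\<in>B \<times> H. (cmod (\<beta> y))\<^sup>2)"
      by (simp only: sum_distrib_left sum.cartesian_product')
    finally have "sqrt (\<Sum>g\<in>G. nz g) \<le> \<kappa>2 * sqrt (\<Sum>y\<in>B \<times> H. (cmod (\<beta> y))\<^sup>2)"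
      using \<open>\<kappa>2 \<ge> 0\<close> by (metis real_sqrt_le_mono real_sqrt_mult real_sqrt_abs abs_of_nonneg power2_eq_square)
    then show ?thesis using \<open>\<kappa>1 \<ge> 0\<close> by (intro mult_left_mono) (auto simp: na_def sum_nonneg)
  qed
  also have "(\<Sum>g\<in>G. na g) = (\<Sum>x\<in>A \<times> G. (cmod (\<alpha> x))\<^sup>2)"
    unfolding na_def by (subst sum.swap) (simp only: sum.cartesian_product')
  finally show "cmod (\<Sum>x\<in>A \<times> G. \<Sum>y\<in>B \<times> H. cnj (\<alpha> x) * (case x of (a, g) \<Rightarrow> \<lambda>(b, h). k a b * K g h) y * \<beta> y)
      \<le> \<kappa>1 * \<kappa>2 * sqrt (\<Sum>x\<in>A \<times> G. (cmod (\<alpha> x))\<^sup>2) * sqrt (\<Sum>y\<in>B \<times> H. (cmod (\<beta> y))\<^sup>2)"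
    by (simp add: mult_ac)
qed

lemma op_norm_le_vec:
  assumes K: "op_norm_le G H K \<kappa>" and "\<kappa> \<ge> 0"
    and a: "\<And>g. g \<in> G \<Longrightarrow> dim_vec (a g) = D" and b: "\<And>h. h \<in> H \<Longrightarrow> dim_vec (b h) = D"
  shows "cmod (\<Sum>g\<in>G. \<Sum>h\<in>H. K g h * cinner (a g) (b h))
     \<le> \<kappa> * sqrt (\<Sum>g\<in>G. sqnorm (a g)) * sqrt (\<Sum>h\<in>H. sqnorm (b h))"
proof -
  define na where "na k = (\<Sum>g\<in>G. (cmod (a g $ k))\<^sup>2)" for k
  define nb where "nb k = (\<Sum>h\<in>H. (cmod (b h $ k))\<^sup>2)" for k
  have "(\<Sum>g\<in>G. \<Sum>h\<in>H. K g h * cinner (a g) (b h)) = (\<Sum>k<D. \<Sum>g\<in>G. \<Sum>h\<in>H. cnj (a g $ k) * K g h * b h $ k)"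
    unfolding cinner_def using a
    by (subst sum.swap, subst (2) sum.swap) (simp add: sum_distrib_left mult_ac)
  also have "cmod \<dots> \<le> (\<Sum>k<D. \<kappa> * (sqrt (na k) * sqrt (nb k)))"
    unfolding na_def nb_def
    by (rule order_trans[OF norm_sum sum_mono]) (use K[unfolded op_norm_le_def] in \<open>simp only: mult.assoc\<close>)
  also have "\<dots> \<le> \<kappa> * (sqrt (\<Sum>k<D. na k) * sqrt (\<Sum>k<D. nb k))"
    unfolding sum_distrib_left[symmetric] na_def nb_def
    by (intro mult_left_mono sum_sqrt_mult_le) (simp_all add: sum_nonneg \<open>\<kappa> \<ge> 0\<close>)
  also have "(\<Sum>k<D. na k) = (\<Sum>g\<in>G. sqnorm (a g))"
    unfolding na_def sqnorm_def using a by (subst sum.swap) simp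
  also have "(\<Sum>k<D. nb k) = (\<Sum>h\<in>H. sqnorm (b h))"
    unfolding nb_def sqnorm_def using b by (subst sum.swap) simp
  finally show ?thesis by (simp add: mult_ac)
qed

lemma sqrt_sum_squares_ge:
  "finite I \<Longrightarrow> i \<in> I \<Longrightarrow> cmod (\<alpha> i) \<le> sqrt (\<Sum>g\<in>I. (cmod (\<alpha> g))\<^sup>2)"
  by (metis member_le_sum norm_ge_zero real_le_rsqrt zero_le_power2)

lemma op_norm_le_delta: "op_norm_le (UNIV::bool set) (UNIV::bool set) (\<lambda>g h. if g = g0 \<and> h = h0 then 1 else 0) 1"
  unfolding op_norm_le_def
proof (intro allI)
  fix \<alpha> \<beta> :: "bool \<Rightarrow> complex"
  have "(\<Sum>g\<in>UNIV. \<Sum>h\<in>UNIV. cnj (\<alpha> g) * (if g = g0 \<and> h = h0 then 1 else 0) * \<beta> h) = cnj (\<alpha> g0) * \<beta> h0"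
    by (cases g0; cases h0) (simp_all add: sum_UNIV_bool)
  moreover have "cmod (cnj (\<alpha> g0) * \<beta> h0) \<le> sqrt (\<Sum>g\<in>UNIV. (cmod (\<alpha> g))\<^sup>2) * sqrt (\<Sum>h\<in>UNIV. (cmod (\<beta> h))\<^sup>2)"
    unfolding norm_mult complex_mod_cnj by (intro mult_mono sqrt_sum_squares_ge) (auto simp: sum_nonneg)
  ultimately show "cmod (\<Sum>g\<in>UNIV. \<Sum>h\<in>UNIV. cnj (\<alpha> g) * (if g = g0 \<and> h = h0 then 1 else 0) * \<beta> h)
    \<le> 1 * sqrt (\<Sum>g\<in>UNIV. (cmod (\<alpha> g))\<^sup>2) * sqrt (\<Sum>h\<in>UNIV. (cmod (\<beta> h))\<^sup>2)" by simp
qed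

text \<open>The overlap matrix of a computational and a Hadamard basis is a scaled Hadamard matrix.\<close>

lemma op_norm_le_hadamard:
  assumes "cmod \<sigma> = 1"
  shows "op_norm_le (UNIV::bool set) (UNIV::bool set) (\<lambda>g h. \<sigma> * bit_sign (g \<and> h) / 2) (1 / sqrt 2)"
  unfolding op_norm_le_def
proof (intro allI)
  fix \<alpha> \<beta> :: "bool \<Rightarrow> complex"
  define w where "w g = (if g then \<beta> False - \<beta> True else \<beta> False + \<beta> True)" for g
  have "(\<Sum>g\<in>UNIV. \<Sum>h\<in>UNIV. cnj (\<alpha> g) * (\<sigma> * bit_sign (g \<and> h) / 2) * \<beta> h)
      = \<sigma> / 2 * (\<Sum>g\<in>UNIV. cnj (\<alpha> g) * w g)"
    unfolding w_def by (simp add: sum_UNIV_bool bit_sign_def algebra_simps)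
  then have "cmod (\<Sum>g\<in>UNIV. \<Sum>h\<in>UNIV. cnj (\<alpha> g) * (\<sigma> * bit_sign (g \<and> h) / 2) * \<beta> h)
      = 1 / 2 * cmod (\<Sum>g\<in>UNIV. cnj (\<alpha> g) * w g)"
    by (simp only: norm_mult norm_divide assms) simp
  also have "\<dots> \<le> 1 / 2 * (sqrt (\<Sum>g\<in>UNIV. (cmod (\<alpha> g))\<^sup>2) * sqrt (\<Sum>g\<in>UNIV. (cmod (w g))\<^sup>2))"
    by (intro mult_left_mono cmod_sum_cnj_mult_le) auto
  also have "(\<Sum>g\<in>UNIV. (cmod (w g))\<^sup>2) = 2 * (\<Sum>h\<in>UNIV. (cmod (\<beta> h))\<^sup>2)"
    unfolding w_def sum_UNIV_bool cmod_power2 by (simp add: power2_eq_square algebra_simps)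
  also have "1 / 2 * (sqrt (\<Sum>g\<in>UNIV. (cmod (\<alpha> g))\<^sup>2) * sqrt (2 * (\<Sum>h\<in>UNIV. (cmod (\<beta> h))\<^sup>2)))
     = 1 / sqrt 2 * sqrt (\<Sum>g\<in>UNIV. (cmod (\<alpha> g))\<^sup>2) * sqrt (\<Sum>h\<in>UNIV. (cmod (\<beta> h))\<^sup>2)"
    by (simp add: real_sqrt_mult field_simps)
  finally show "cmod (\<Sum>g\<in>UNIV. \<Sum>h\<in>UNIV. cnj (\<alpha> g) * (\<sigma> * bit_sign (g \<and> h) / 2) * \<beta> h)
      \<le> 1 / sqrt 2 * sqrt (\<Sum>g\<in>UNIV. (cmod (\<alpha> g))\<^sup>2) * sqrt (\<Sum>h\<in>UNIV. (cmod (\<beta> h))\<^sup>2)" .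
qed

definition overlap_bound_bit :: "bool \<Rightarrow> bool \<Rightarrow> real" where
  "overlap_bound_bit a b = (if a = b then 1 else 1 / sqrt 2)"

fun overlap_bound :: "bool list \<Rightarrow> bool list \<Rightarrow> real" where
  "overlap_bound (a # s) (b # t) = overlap_bound_bit a b * overlap_bound s t"
| "overlap_bound _ _ = 1"

lemma overlap_bound_bit_nonneg: "overlap_bound_bit a b \<ge> 0"
  unfolding overlap_bound_bit_def by simp

lemma overlap_bound_nonneg: "overlap_bound s t \<ge> 0"
  by (induction s t rule: overlap_bound.induct) (simp_all add: overlap_bound_bit_nonneg)

lemma overlap_bound_commute: "overlap_bound s t = overlap_bound t s"
  by (induction s t rule: overlap_bound.induct) (auto simp: overlap_bound_bit_def)

lemma sum_overlap_bound:
  "s \<in> bitstrings n \<Longrightarrow> (\<Sum>t\<in>bitstrings n. overlap_bound s t) = (1 + 1 / sqrt 2) ^ n"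
proof (induction n arbitrary: s)
  case 0
  then show ?case by (simp add: bitstrings_0)
next
  case (Suc n)
  then obtain a s' where s: "s = a # s'" "s' \<in> bitstrings n"
    by (auto simp: bitstrings_def length_Suc_conv)
  have "(\<Sum>t\<in>bitstrings (Suc n). overlap_bound s t) = (\<Sum>b\<in>UNIV. \<Sum>t\<in>bitstrings n. overlap_bound_bit a b * overlap_bound s' t)"
    unfolding sum_bitstrings_Suc s by simp
  also have "\<dots> = (\<Sum>b\<in>UNIV. overlap_bound_bit a b) * (\<Sum>t\<in>bitstrings n. overlap_bound s' t)"
    by (rule sum_product[symmetric])
  also have "(\<Sum>b\<in>UNIV. overlap_bound_bit a b) = 1 + 1 / sqrt 2"
    unfolding sum_UNIV_bool overlap_bound_bit_def by (cases a) auto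
  finally show ?case using Suc.IH[OF s(2)] by simp
qed

lemma sum_overlap_bound_sqrt_mult_le:
  assumes "\<And>s. x s \<ge> 0"
  shows "(\<Sum>s\<in>bitstrings n. \<Sum>t\<in>bitstrings n. overlap_bound s t * (sqrt (x s) * sqrt (x t)))
     \<le> (1 + 1 / sqrt 2) ^ n * (\<Sum>s\<in>bitstrings n. x s)"
proof -
  define C where "C = (1 + 1 / sqrt 2) ^ n"
  have rows: "(\<Sum>s\<in>bitstrings n. \<Sum>t\<in>bitstrings n. overlap_bound s t * x s) = C * (\<Sum>s\<in>bitstrings n. x s)"
    unfolding sum_distrib_left C_def
    by (intro sum.cong refl)
      (simp add: sum_distrib_right[symmetric] sum_distrib_left[symmetric] sum_overlap_bound mult.commute)
  have cols: "(\<Sum>s\<in>bitstrings n. \<Sum>t\<in>bitstrings n. overlap_bound s t * x t) = C * (\<Sum>s\<in>bitstrings n. x s)"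
    by (subst sum.swap) (simp add: overlap_bound_commute rows)
  have "(\<Sum>s\<in>bitstrings n. \<Sum>t\<in>bitstrings n. overlap_bound s t * (sqrt (x s) * sqrt (x t)))
     \<le> (\<Sum>s\<in>bitstrings n. \<Sum>t\<in>bitstrings n. overlap_bound s t * x s / 2 + overlap_bound s t * x t / 2)"
  proof (intro sum_mono)
    fix s t
    have "sqrt (x s) * sqrt (x t) \<le> (x s + x t) / 2"
      using assms[of s] assms[of t] sum_squares_bound[of "sqrt (x s)" "sqrt (x t)"] by simp
    then have "overlap_bound s t * (sqrt (x s) * sqrt (x t)) \<le> overlap_bound s t * ((x s + x t) / 2)"
      using overlap_bound_nonneg by (rule mult_left_mono)
    then show "overlap_bound s t * (sqrt (x s) * sqrt (x t)) \<le> overlap_bound s t * x s / 2 + overlap_bound s t * x t / 2"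
      by (simp add: algebra_simps add_divide_distrib)
  qed
  also have "\<dots> = C * (\<Sum>s\<in>bitstrings n. x s)"
    by (simp add: sum.distrib rows cols flip: sum_divide_distrib)
  finally show ?thesis unfolding C_def .
qed

lemma op_norm_le_psi:
  "op_norm_le (UNIV::bool set) (UNIV::bool set)
     (\<lambda>g h. cinner (psi a (if b then g else e) (if b then e else g)) (psi a' (if b then f else h) (if b then h else f)))
     (overlap_bound_bit a a')"
proof (cases "a = a'")
  case True
  then have "overlap_bound_bit a a' = 1" unfolding overlap_bound_bit_def by simp
  then show ?thesis
    by (simp only:) (rule op_norm_le_cong[OF op_norm_le_delta[of f e]]; cases b; auto simp: cinner_psi True)
next
  case False
  then have "overlap_bound_bit a a' = 1 / sqrt 2" unfolding overlap_bound_bit_def by simp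
  then show ?thesis
    by (simp only:) (rule op_norm_le_cong[OF op_norm_le_hadamard[OF cmod_bit_sign[of "e \<and> f"]]];
        cases b; auto simp: cinner_psi False mult.commute)
qed

lemma bij_betw_Cons_bitstrings: "bij_betw (\<lambda>(a, g). a # g) (UNIV \<times> bitstrings n) (bitstrings (Suc n))"
  unfolding bij_betw_def bitstrings_Suc by (auto simp: inj_on_def)

text \<open>With one of the strings \<open>r\<^sub>0, r\<^sub>1\<close> of both states held fixed (which one is selected
  by \<open>b\<close>), the overlap matrix of the \<open>\<Psi>\<close> is a tensor product of qubit overlap matrices.\<close>

lemma op_norm_le_Psi:
  assumes "s \<in> bitstrings n" "t \<in> bitstrings n" "e \<in> bitstrings n" "f \<in> bitstrings n"
  shows "op_norm_le (bitstrings n) (bitstrings n)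
     (\<lambda>g h. cinner (Psi n s (if b then g else e) (if b then e else g)) (Psi n t (if b then f else h) (if b then h else f)))
     (overlap_bound s t)"
  using assms
proof (induction n arbitrary: s t e f)
  case 0
  then show ?case
    by (simp add: bitstrings_0 op_norm_le_def Psi_0 cinner_def norm_mult)
next
  case (Suc n)
  from Suc.prems obtain a s' a' t' e1 e' f1 f' where cons:
    "s = a # s'" "t = a' # t'" "e = e1 # e'" "f = f1 # f'"
    and tails: "s' \<in> bitstrings n" "t' \<in> bitstrings n" "e' \<in> bitstrings n" "f' \<in> bitstrings n"
    by (auto simp: bitstrings_def length_Suc_conv)
  have tensor: "op_norm_le (UNIV \<times> bitstrings n) (UNIV \<times> bitstrings n)
     (\<lambda>(a1, g) (b1, h). cinner (psi a (if b then a1 else e1) (if b then e1 else a1)) (psi a' (if b then f1 else b1) (if b then b1 else f1))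
        * cinner (Psi n s' (if b then g else e') (if b then e' else g)) (Psi n t' (if b then f' else h) (if b then h else f')))
     (overlap_bound_bit a a' * overlap_bound s' t')"
    by (rule op_norm_le_tensor[OF _ _ _ _ op_norm_le_psi Suc.IH[OF tails]
          overlap_bound_bit_nonneg overlap_bound_nonneg]) auto
  have "overlap_bound s t = overlap_bound_bit a a' * overlap_bound s' t'"
    using cons by simp
  then have "op_norm_le (UNIV \<times> bitstrings n) (UNIV \<times> bitstrings n)
     (\<lambda>x y. cinner (Psi (Suc n) s (if b then (case x of (a1, g) \<Rightarrow> a1 # g) else e) (if b then e else (case x of (a1, g) \<Rightarrow> a1 # g)))
       (Psi (Suc n) t (if b then f else (case y of (b1, h) \<Rightarrow> b1 # h)) (if b then (case y of (b1, h) \<Rightarrow> b1 # h) else f)))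
     (overlap_bound s t)"
    by (simp only:) (rule op_norm_le_cong[OF tensor]; cases b; auto simp: cons Psi_Cons cinner_kron_vec)
  then show ?case
    by (rule op_norm_le_reindex[OF _ bij_betw_Cons_bitstrings bij_betw_Cons_bitstrings])
qed

lemma op_norm_le_Psi_blocks:
  assumes "s \<in> bitstrings n" "t \<in> bitstrings n" and e: "e \<in> bitstrings n" and f: "f \<in> bitstrings n"
  shows "op_norm_le {r \<in> bitstrings n \<times> bitstrings n. (if b then snd r else fst r) = e}
             {q \<in> bitstrings n \<times> bitstrings n. (if b then fst q else snd q) = f}
             (\<lambda>r q. cinner (Psi n s (fst r) (snd r)) (Psi n t (fst q) (snd q))) (overlap_bound s t)"
proof (rule op_norm_le_reindex)
  show "bij_betw (\<lambda>g. if b then (g, e) else (e, g)) (bitstrings n)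
      {r \<in> bitstrings n \<times> bitstrings n. (if b then snd r else fst r) = e}"
    and "bij_betw (\<lambda>h. if b then (f, h) else (h, f)) (bitstrings n)
      {q \<in> bitstrings n \<times> bitstrings n. (if b then fst q else snd q) = f}"
    using e f by (cases b; auto simp: bij_betw_def inj_on_def image_iff)+
  show "op_norm_le (bitstrings n) (bitstrings n)
     (\<lambda>g h. cinner (Psi n s (fst (if b then (g, e) else (e, g))) (snd (if b then (g, e) else (e, g))))
        (Psi n t (fst (if b then (f, h) else (h, f))) (snd (if b then (f, h) else (h, f))))) (overlap_bound s t)"
    using op_norm_le_Psi[OF assms, of b] by (cases b) simp_all
qed

section \<open>Vectors in the ranges of commuting projections\<close>

lemma cinner_eq_cinner_mult_orth_proj:
  assumes X: "orth_proj D X" and Y: "orth_proj D Y" and XY: "X * Y = Y * X"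
    and u: "X *\<^sub>v u = u" "dim_vec u = D" and v: "Y *\<^sub>v v = v" "dim_vec v = D"
  shows "cinner u v = cinner ((X * Y) *\<^sub>v u) ((X * Y) *\<^sub>v v)"
proof -
  have M: "orth_proj D (X * Y)" by (rule orth_proj_mult[OF X Y XY])
  have car: "X \<in> carrier_mat D D" "Y \<in> carrier_mat D D" "X * Y \<in> carrier_mat D D"
    using X Y M by (simp_all add: orth_proj_carrier)
  have "cinner u v = cinner (X *\<^sub>v u) (Y *\<^sub>v v)" using u v by simp
  also have "\<dots> = cinner u (X *\<^sub>v (Y *\<^sub>v v))"
    using orth_proj_cinner_swap[OF X, of u "Y *\<^sub>v v"] u v car by simp
  also have "X *\<^sub>v (Y *\<^sub>v v) = (X * Y) *\<^sub>v v"
    using car v by (metis assoc_mult_mat_vec carrier_vecI)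
  also have "\<dots> = (X * Y) *\<^sub>v ((X * Y) *\<^sub>v v)"
    using orth_proj_mult_vec_idem[OF M] v by simp
  also have "cinner u \<dots> = cinner ((X * Y) *\<^sub>v u) ((X * Y) *\<^sub>v v)"
    using orth_proj_cinner_swap[OF M] u v car by simp
  finally show ?thesis .
qed

lemma sum_sqnorm_mult_sum_to_id:
  assumes X: "orth_proj D X" and Y: "\<And>f. f \<in> F \<Longrightarrow> orth_proj D (Y f)" "sum_to_id D F Y"
    and comm: "\<And>f. f \<in> F \<Longrightarrow> X * Y f = Y f * X" and u: "X *\<^sub>v u = u" "dim_vec u = D"
  shows "(\<Sum>f\<in>F. sqnorm ((X * Y f) *\<^sub>v u)) = sqnorm u"
proof -
  have "(X * Y f) *\<^sub>v u = Y f *\<^sub>v u" if "f \<in> F" for f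
    using comm[OF that] u orth_proj_carrier[OF X] orth_proj_carrier[OF Y(1)[OF that]]
    by (metis assoc_mult_mat_vec carrier_vecI)
  then show ?thesis
    using sum_sqnorm_sum_to_id[OF Y(2) _ u(2)] Y(1) by simp
qed

lemma sum_sqnorm_mult_blocks:
  assumes fin: "finite E" "finite Rs"
    and X: "\<And>e. e \<in> E \<Longrightarrow> orth_proj D (X e)" and Y: "\<And>f. f \<in> F \<Longrightarrow> orth_proj D (Y f)" "sum_to_id D F Y"
    and comm: "\<And>e f. e \<in> E \<Longrightarrow> f \<in> F \<Longrightarrow> X e * Y f = Y f * X e"
    and k: "\<And>r. r \<in> Rs \<Longrightarrow> k r \<in> E"
    and u: "\<And>r. r \<in> Rs \<Longrightarrow> X (k r) *\<^sub>v u r = u r" "\<And>r. r \<in> Rs \<Longrightarrow> dim_vec (u r) = D"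
  shows "(\<Sum>e\<in>E. \<Sum>f\<in>F. \<Sum>r\<in>{r \<in> Rs. k r = e}. sqnorm ((X e * Y f) *\<^sub>v u r)) = (\<Sum>r\<in>Rs. sqnorm (u r))"
proof -
  have "(\<Sum>e\<in>E. \<Sum>f\<in>F. \<Sum>r\<in>{r \<in> Rs. k r = e}. sqnorm ((X e * Y f) *\<^sub>v u r))
      = (\<Sum>e\<in>E. \<Sum>r\<in>{r \<in> Rs. k r = e}. \<Sum>f\<in>F. sqnorm ((X e * Y f) *\<^sub>v u r))"
    by (intro sum.cong refl) (rule sum.swap)
  also have "\<dots> = (\<Sum>e\<in>E. \<Sum>r\<in>{r \<in> Rs. k r = e}. sqnorm (u r))"
  proof (intro sum.cong refl)
    fix e r assume e: "e \<in> E" and "r \<in> {r \<in> Rs. k r = e}"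
    then have r: "r \<in> Rs" "k r = e" by auto
    show "(\<Sum>f\<in>F. sqnorm ((X e * Y f) *\<^sub>v u r)) = sqnorm (u r)"
      using sum_sqnorm_mult_sum_to_id[OF X[OF e] Y comm[OF e]] u[OF r(1)] r(2) by simp
  qed
  also have "\<dots> = (\<Sum>r\<in>Rs. sqnorm (u r))"
    using sum.group[OF fin(2) fin(1), of k "\<lambda>r. sqnorm (u r)"] k by auto
  finally show ?thesis .
qed

text \<open>If the \<open>u\<^sub>r\<close> lie in the ranges of the \<open>X\<^sub>e\<close> and the \<open>v\<^sub>q\<close> in those of the \<open>Y\<^sub>f\<close>,
  inserting \<open>X\<^sub>e Y\<^sub>f\<close> decouples the blocks \<open>{k r = e} \<times> {l q = f}\<close>, so only their norms
  matter.\<close>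

lemma cmod_sum_cinner_le_commuting_blocks:
  fixes X :: "'e \<Rightarrow> complex mat" and Y :: "'f \<Rightarrow> complex mat" and k :: "'r \<Rightarrow> 'e" and l :: "'q \<Rightarrow> 'f"
  assumes fin: "finite E" "finite F" "finite Rs" "finite Qs"
    and X: "\<And>e. e \<in> E \<Longrightarrow> orth_proj D (X e)" "sum_to_id D E X"
    and Y: "\<And>f. f \<in> F \<Longrightarrow> orth_proj D (Y f)" "sum_to_id D F Y"
    and comm: "\<And>e f. e \<in> E \<Longrightarrow> f \<in> F \<Longrightarrow> X e * Y f = Y f * X e"
    and k: "\<And>r. r \<in> Rs \<Longrightarrow> k r \<in> E"
    and u: "\<And>r. r \<in> Rs \<Longrightarrow> X (k r) *\<^sub>v u r = u r" "\<And>r. r \<in> Rs \<Longrightarrow> dim_vec (u r) = D"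
    and l: "\<And>q. q \<in> Qs \<Longrightarrow> l q \<in> F"
    and v: "\<And>q. q \<in> Qs \<Longrightarrow> Y (l q) *\<^sub>v v q = v q" "\<And>q. q \<in> Qs \<Longrightarrow> dim_vec (v q) = D"
    and K: "\<And>e f. e \<in> E \<Longrightarrow> f \<in> F \<Longrightarrow> op_norm_le {r \<in> Rs. k r = e} {q \<in> Qs. l q = f} K c"
    and "c \<ge> 0"
  shows "cmod (\<Sum>r\<in>Rs. \<Sum>q\<in>Qs. K r q * cinner (u r) (v q))
    \<le> c * sqrt (\<Sum>r\<in>Rs. sqnorm (u r)) * sqrt (\<Sum>q\<in>Qs. sqnorm (v q))"
proof -
  define RS where "RS e = {r \<in> Rs. k r = e}" for e
  define QS where "QS f = {q \<in> Qs. l q = f}" for f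
  define M where "M e f = X e * Y f" for e f
  define A where "A = (\<lambda>(e, f). \<Sum>r\<in>RS e. sqnorm (M e f *\<^sub>v u r))"
  define B where "B = (\<lambda>(e, f). \<Sum>q\<in>QS f. sqnorm (M e f *\<^sub>v v q))"
  have M: "orth_proj D (M e f)" if "e \<in> E" "f \<in> F" for e f
    unfolding M_def using that by (intro orth_proj_mult X(1) Y(1) comm)
  have inner: "cinner (u r) (v q) = cinner (M (k r) (l q) *\<^sub>v u r) (M (k r) (l q) *\<^sub>v v q)"
    if "r \<in> Rs" "q \<in> Qs" for r q
    unfolding M_def using that by (intro cinner_eq_cinner_mult_orth_proj[where D=D] X(1) Y(1) comm k l u v)
  have group_Rs: "(\<Sum>e\<in>E. \<Sum>r\<in>RS e. h r) = (\<Sum>r\<in>Rs. h r)" for h :: "'r \<Rightarrow> complex"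
    unfolding RS_def using sum.group[OF fin(3) fin(1), of k h] k by auto
  have group_Qs: "(\<Sum>f\<in>F. \<Sum>q\<in>QS f. h q) = (\<Sum>q\<in>Qs. h q)" for h :: "'q \<Rightarrow> complex"
    unfolding QS_def using sum.group[OF fin(4) fin(2), of l h] l by auto
  have "(\<Sum>r\<in>Rs. \<Sum>q\<in>Qs. K r q * cinner (u r) (v q))
     = (\<Sum>e\<in>E. \<Sum>f\<in>F. \<Sum>r\<in>RS e. \<Sum>q\<in>QS f. K r q * cinner (u r) (v q))"
    unfolding group_Rs[symmetric] group_Qs[symmetric] by (intro sum.cong refl) (rule sum.swap)
  also have "\<dots> = (\<Sum>(e, f)\<in>E \<times> F. \<Sum>r\<in>RS e. \<Sum>q\<in>QS f. K r q * cinner (M e f *\<^sub>v u r) (M e f *\<^sub>v v q))"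
    unfolding sum.cartesian_product' prod.case using inner by (intro sum.cong refl) (auto simp: RS_def QS_def)
  also have "cmod \<dots> \<le> (\<Sum>x\<in>E \<times> F. c * (sqrt (A x) * sqrt (B x)))"
    unfolding A_def B_def
    by (rule order_trans[OF norm_sum sum_mono], clarify, rule order_trans[OF op_norm_le_vec])
      (use K \<open>c \<ge> 0\<close> M u(2) v(2) in \<open>auto simp: RS_def QS_def orth_proj_def mult_ac\<close>)
  also have "\<dots> \<le> c * (sqrt (sum A (E \<times> F)) * sqrt (sum B (E \<times> F)))"
    unfolding sum_distrib_left[symmetric] A_def B_def
    by (intro mult_left_mono sum_sqrt_mult_le) (auto simp: sum_nonneg sqnorm_nonneg \<open>c \<ge> 0\<close>)
  also have "sum A (E \<times> F) = (\<Sum>r\<in>Rs. sqnorm (u r))"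
    unfolding A_def sum.cartesian_product' prod.case M_def RS_def
    by (rule sum_sqnorm_mult_blocks[where X = X and Y = Y and k = k and u = u, OF fin(1,3) X(1) Y comm k u])
  also have "sum B (E \<times> F) = (\<Sum>f\<in>F. \<Sum>e\<in>E. \<Sum>q\<in>QS f. sqnorm ((Y f * X e) *\<^sub>v v q))"
    unfolding B_def sum.cartesian_product' prod.case M_def using comm
    by (subst sum.swap) (auto intro!: sum.cong)
  also have "\<dots> = (\<Sum>q\<in>Qs. sqnorm (v q))"
    unfolding QS_def
    by (rule sum_sqnorm_mult_blocks[where X = Y and Y = X and k = l and u = v, OF fin(2,4) Y(1) X])
      (use comm l v in auto)
  finally show ?thesis by (simp add: mult_ac)
qed

section \<open>Expansion in a family of unit vectors\<close>

lemma index_kron_vec_eq_sum_unit_vec: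
  assumes "dim_vec a = N" "l < N * dim_vec w"
  shows "kron_vec a w $ l = (\<Sum>x<N. a $ x * kron_vec (unit_vec N x) w $ l)"
  using assms div_less_of_less_mult[OF assms(2)]
  by (simp add: index_kron_vec if_distrib[of "\<lambda>z. _ * (z * _)"] cong: if_cong)

lemma mult_mat_vec_kron_vec_eq_sum:
  assumes U: "U \<in> carrier_mat (N * dE) (N * dE)" and chi: "dim_vec chi = dE" and a: "dim_vec a = N"
    and k: "k < N * dE"
  shows "(U *\<^sub>v kron_vec a chi) $ k = (\<Sum>x<N. a $ x * (U *\<^sub>v kron_vec (unit_vec N x) chi) $ k)"
proof -
  have "(U *\<^sub>v kron_vec a chi) $ k = (\<Sum>l<N * dE. U $$ (k, l) * (\<Sum>x<N. a $ x * kron_vec (unit_vec N x) chi $ l))"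
    using index_mult_mat_vec_sum[OF U, of "kron_vec a chi" k] chi a k
    by (simp add: index_kron_vec_eq_sum_unit_vec[OF a])
  also have "\<dots> = (\<Sum>x<N. a $ x * (\<Sum>l<N * dE. U $$ (k, l) * kron_vec (unit_vec N x) chi $ l))"
    unfolding sum_distrib_left by (subst sum.swap) (simp only: mult_ac)
  also have "\<dots> = (\<Sum>x<N. a $ x * (U *\<^sub>v kron_vec (unit_vec N x) chi) $ k)"
    using chi k by (simp add: index_mult_mat_vec_sum[OF U] del: index_mult_mat_vec)
  finally show ?thesis .
qed

lemma sqnorm_unitary_kron_unit_vec:
  assumes U: "unitary (N * dE) U" and chi: "dim_vec chi = dE" "cinner chi chi = 1" and x: "x < N"
  shows "sqnorm (U *\<^sub>v kron_vec (unit_vec N x) chi) = 1"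
proof -
  have "cinner (unit_vec N x) (unit_vec N x) = (1::complex)"
    unfolding cinner_def using x by (simp add: if_distrib cong: if_cong)
  then have "cinner (U *\<^sub>v kron_vec (unit_vec N x) chi) (U *\<^sub>v kron_vec (unit_vec N x) chi) = 1"
    using unitary_cinner[OF U] chi by (simp add: cinner_kron_vec)
  then show ?thesis by (simp add: cinner_self_eq_sqnorm)
qed

lemma sum_sqnorm_linear_combination:
  fixes a v :: "'j \<Rightarrow> nat \<Rightarrow> complex"
  assumes real: "\<And>j x. j \<in> J \<Longrightarrow> x < N \<Longrightarrow> cnj (a j x) = a j x"
  shows "(\<Sum>x<N. \<Sum>k<D. (cmod (\<Sum>j\<in>J. cnj (a j x) * v j k))\<^sup>2)
     = Re (\<Sum>j\<in>J. \<Sum>j'\<in>J. (\<Sum>x<N. cnj (a j x) * a j' x) * (\<Sum>k<D. cnj (v j k) * v j' k))"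
proof -
  have "(\<Sum>x<N. \<Sum>k<D. cnj (\<Sum>j\<in>J. cnj (a j x) * v j k) * (\<Sum>j'\<in>J. cnj (a j' x) * v j' k))
     = (\<Sum>x<N. \<Sum>k<D. \<Sum>j\<in>J. \<Sum>j'\<in>J. (cnj (a j x) * a j' x) * (cnj (v j k) * v j' k))"
  proof (intro sum.cong refl)
    fix x k assume "x \<in> {..<N}"
    then have re: "cnj (a j x) = a j x" if "j \<in> J" for j using real that by simp
    have cnj_sum: "cnj (\<Sum>j\<in>J. cnj (a j x) * v j k) = (\<Sum>j\<in>J. a j x * cnj (v j k))"
      by (simp add: sum_conjugate[symmetric, simplified])
    show "cnj (\<Sum>j\<in>J. cnj (a j x) * v j k) * (\<Sum>j'\<in>J. cnj (a j' x) * v j' k)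
        = (\<Sum>j\<in>J. \<Sum>j'\<in>J. (cnj (a j x) * a j' x) * (cnj (v j k) * v j' k))"
      unfolding cnj_sum sum_product by (intro sum.cong refl) (simp add: re mult_ac)
  qed
  also have "\<dots> = (\<Sum>x<N. \<Sum>j\<in>J. \<Sum>j'\<in>J. \<Sum>k<D. (cnj (a j x) * a j' x) * (cnj (v j k) * v j' k))"
    by (intro sum.cong refl) (simp only: sum.swap[of _ "{..<D}"])
  also have "\<dots> = (\<Sum>j\<in>J. \<Sum>j'\<in>J. \<Sum>x<N. \<Sum>k<D. (cnj (a j x) * a j' x) * (cnj (v j k) * v j' k))"
    by (simp only: sum.swap[of _ "{..<N}"])
  also have "\<dots> = (\<Sum>j\<in>J. \<Sum>j'\<in>J. (\<Sum>x<N. cnj (a j x) * a j' x) * (\<Sum>k<D. cnj (v j k) * v j' k))"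
    by (simp only: sum_product)
  finally have Gram: "(\<Sum>x<N. \<Sum>k<D. cnj (\<Sum>j\<in>J. cnj (a j x) * v j k) * (\<Sum>j'\<in>J. cnj (a j' x) * v j' k))
     = (\<Sum>j\<in>J. \<Sum>j'\<in>J. (\<Sum>x<N. cnj (a j x) * a j' x) * (\<Sum>k<D. cnj (v j k) * v j' k))" .
  have "(\<Sum>x<N. \<Sum>k<D. cnj (\<Sum>j\<in>J. cnj (a j x) * v j k) * (\<Sum>j'\<in>J. cnj (a j' x) * v j' k))
     = of_real (\<Sum>x<N. \<Sum>k<D. (cmod (\<Sum>j\<in>J. cnj (a j x) * v j k))\<^sup>2)"
    by (simp only: sum_cnj_mult_self of_real_sum)
  then show ?thesis using Gram by (metis Re_complex_of_real)
qed

text \<open>For unit vectors \<open>w\<^sub>x\<close> and real coefficients \<open>a\<^sub>j\<^sub>x\<close>, Cauchy-Schwarz in each \<open>w\<^sub>x\<close> and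
  then over the \<open>N\<close> indices \<open>x\<close> bounds \<open>\<Sum>\<^sub>j <v\<^sub>j, \<Sum>\<^sub>x a\<^sub>j\<^sub>x w\<^sub>x>\<close> by \<open>sqrt N\<close> times the
  square root of the Gram sum of the \<open>a\<^sub>j \<otimes> v\<^sub>j\<close>; the \<open>w\<^sub>x\<close> need not be orthogonal.\<close>

lemma cmod_sum_le_sqrt_Gram:
  fixes a v :: "'j \<Rightarrow> nat \<Rightarrow> complex" and w :: "nat \<Rightarrow> nat \<Rightarrow> complex"
  assumes real: "\<And>j x. j \<in> J \<Longrightarrow> x < N \<Longrightarrow> cnj (a j x) = a j x"
    and w: "\<And>x. x < N \<Longrightarrow> (\<Sum>k<D. (cmod (w x k))\<^sup>2) = 1"
  shows "cmod (\<Sum>j\<in>J. \<Sum>x<N. \<Sum>k<D. a j x * cnj (v j k) * w x k)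
    \<le> sqrt (real N) * sqrt (Re (\<Sum>j\<in>J. \<Sum>j'\<in>J. (\<Sum>x<N. cnj (a j x) * a j' x) * (\<Sum>k<D. cnj (v j k) * v j' k)))"
proof -
  define W where "W x k = (\<Sum>j\<in>J. cnj (a j x) * v j k)" for x k
  define nW where "nW x = (\<Sum>k<D. (cmod (W x k))\<^sup>2)" for x
  have cnj_W: "cnj (W x k) = (\<Sum>j\<in>J. a j x * cnj (v j k))" for x k
    unfolding W_def by (simp add: sum_conjugate[symmetric, simplified])
  have "(\<Sum>j\<in>J. \<Sum>x<N. \<Sum>k<D. a j x * cnj (v j k) * w x k) = (\<Sum>x<N. \<Sum>j\<in>J. \<Sum>k<D. a j x * cnj (v j k) * w x k)"
    by (rule sum.swap)
  also have "\<dots> = (\<Sum>x<N. \<Sum>k<D. cnj (W x k) * w x k)"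
    unfolding cnj_W sum_distrib_right by (intro sum.cong refl) (rule sum.swap)
  also have "cmod \<dots> \<le> (\<Sum>x<N. sqrt (nW x) * 1)"
  proof (rule order_trans[OF norm_sum sum_mono])
    fix x assume "x \<in> {..<N}"
    then show "cmod (\<Sum>k<D. cnj (W x k) * w x k) \<le> sqrt (nW x) * 1"
      using cmod_sum_cnj_mult_le[of "W x" "w x" "{..<D}"] w[of x] unfolding nW_def by simp
  qed
  also have "\<dots> \<le> sqrt (\<Sum>x<N. nW x) * sqrt (\<Sum>x<N. 1)"
    using sum_sqrt_mult_le[of nW "\<lambda>_. 1" "{..<N}"] by (simp add: nW_def sum_nonneg)
  finally show ?thesis
    using sum_sqnorm_linear_combination[OF real, where D = D and v = v] unfolding nW_def W_def by (simp add: mult.commute)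
qed

lemma le_of_le_sqrt_mult:
  fixes x a b :: real
  assumes "a \<ge> 0" "b \<ge> 0" and x: "x \<le> sqrt a * sqrt (b * x)"
  shows "x \<le> a * b"
proof (cases "x > 0")
  case True
  have "x * x \<le> (sqrt a * sqrt (b * x)) * (sqrt a * sqrt (b * x))"
    using x True by (intro mult_mono) auto
  also have "\<dots> = (a * b) * x" using assms True by (simp add: real_sqrt_mult[symmetric] mult_ac)
  finally show ?thesis using True by simp
qed (use assms in \<open>simp add: order_trans[of x 0]\<close>)

lemma mult_mat_vec_absorb:
  assumes "P * Z = Z" "P \<in> carrier_mat D D" "Z \<in> carrier_mat D D" "dim_vec v = D"
  shows "P *\<^sub>v (Z *\<^sub>v v) = Z *\<^sub>v v"
  using assms by (metis assoc_mult_mat_vec carrier_vecI)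

section \<open>The cheating strategy\<close>

locale cheating_strategy =
  fixes n dE :: nat and chi :: "complex vec" and U :: "complex mat" and d0 d1 d' :: nat
    and R :: "bool \<Rightarrow> complex mat"
    and Proj :: "bool \<Rightarrow> bool list \<Rightarrow> bool \<Rightarrow> bool list \<Rightarrow> complex mat"
  assumes strategy: "strategy n dE chi U d0 d1 d' R Proj"
begin

abbreviation "N \<equiv> (4::nat) ^ n"
abbreviation "D \<equiv> d0 * d1 * d'"
abbreviation "BS \<equiv> bitstrings n"
abbreviation "RS \<equiv> BS \<times> BS"

lemma dim_chi: "dim_vec chi = dE"
  and cinner_chi: "cinner chi chi = 1"
  and D_eq: "D = N * dE"
  and unitary_U: "unitary (N * dE) U"
  and measurement_R: "projective_measurement d' UNIV R"
  using strategy unfolding strategy_def by auto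

lemma carrier_U: "U \<in> carrier_mat (N * dE) (N * dE)"
  using unitary_U unfolding unitary_def by simp

lemma orth_proj_Proj0: "s \<in> BS \<Longrightarrow> e \<in> BS \<Longrightarrow> orth_proj d0 (Proj False s b e)"
  and orth_proj_Proj1: "s \<in> BS \<Longrightarrow> e \<in> BS \<Longrightarrow> orth_proj d1 (Proj True s b e)"
  and sum_to_id_Proj0: "s \<in> BS \<Longrightarrow> sum_to_id d0 BS (Proj False s b)"
  and sum_to_id_Proj1: "s \<in> BS \<Longrightarrow> sum_to_id d1 BS (Proj True s b)"
  using strategy unfolding strategy_def
  by (metis (full_types) projective_measurement_orth_proj projective_measurement_sum_to_id)+

lemma orth_proj_R: "orth_proj d' (R b)"
  using projective_measurement_orth_proj[OF measurement_R] by simp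

definition input :: "bool list \<Rightarrow> bool list \<times> bool list \<Rightarrow> complex vec" where
  "input s r = Psi n s (fst r) (snd r)"

definition state :: "bool list \<Rightarrow> bool list \<times> bool list \<Rightarrow> complex vec" where
  "state s r = Phi n chi U s (fst r) (snd r)"

definition basis :: "nat \<Rightarrow> complex vec" where
  "basis x = U *\<^sub>v kron_vec (unit_vec N x) chi"

definition success_proj :: "bool list \<Rightarrow> bool list \<times> bool list \<Rightarrow> bool \<Rightarrow> complex mat" where
  "success_proj s r b = kron_mat (kron_mat (Proj False s b (if b then snd r else fst r))
      (Proj True s b (if b then fst r else snd r))) (R b)"

definition post :: "bool list \<Rightarrow> bool list \<times> bool list \<Rightarrow> bool \<Rightarrow> complex vec" where
  "post s r b = success_proj s r b *\<^sub>v state s r"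

definition T :: real where
  "T = (\<Sum>s\<in>BS. \<Sum>(r, b)\<in>RS \<times> UNIV. sqnorm (post s r b))"

lemma dim_state: "dim_vec (state s r) = D"
  unfolding state_def Phi_def using carrier_U D_eq by simp

lemma dim_basis: "dim_vec (basis x) = D"
  unfolding basis_def using carrier_U D_eq by simp

lemma orth_proj_success_proj: "s \<in> BS \<Longrightarrow> r \<in> RS \<Longrightarrow> orth_proj D (success_proj s r b)"
  unfolding success_proj_def by (intro orth_proj_kron_mat orth_proj_Proj0 orth_proj_Proj1 orth_proj_R) auto

lemma dim_post:
  assumes "s \<in> BS" "r \<in> RS"
  shows "dim_vec (post s r b) = D"
  using carrier_matD(1)[OF orth_proj_carrier[OF orth_proj_success_proj[OF assms]]] unfolding post_def by simp

lemma cinner_state_success_proj: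
  assumes "s \<in> BS" "r \<in> RS"
  shows "cinner (state s r) (success_proj s r b *\<^sub>v state s r) = of_real (sqnorm (post s r b))"
  unfolding post_def cinner_self_eq_sqnorm[symmetric]
  by (rule orth_proj_cinner_self[OF orth_proj_success_proj[OF assms] dim_state, symmetric])

lemma real_vec_input: "x < N \<Longrightarrow> cnj (input s r $ x) = input s r $ x"
  using real_vec_Psi unfolding input_def real_vec_def by simp

lemma sqnorm_basis: "x < N \<Longrightarrow> (\<Sum>k<D. (cmod (basis x $ k))\<^sup>2) = 1"
  using sqnorm_unitary_kron_unit_vec[OF unitary_U dim_chi cinner_chi] dim_basis
  unfolding basis_def sqnorm_def by simp

lemma sqnorm_post_eq:
  assumes "s \<in> BS" "r \<in> RS"
  shows "sqnorm (post s r b) = Re (\<Sum>x<N. \<Sum>k<D. input s r $ x * cnj (post s r b $ k) * basis x $ k)"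
proof -
  have "of_real (sqnorm (post s r b)) = cinner (post s r b) (state s r)"
    using cinner_state_success_proj[OF assms, of b]
      orth_proj_cinner_swap[OF orth_proj_success_proj[OF assms] dim_state dim_state] by (simp add: post_def)
  also have "\<dots> = (\<Sum>k<D. cnj (post s r b $ k) * (\<Sum>x<N. input s r $ x * basis x $ k))"
    unfolding cinner_def dim_post[OF assms] state_def Phi_def input_def basis_def
    using mult_mat_vec_kron_vec_eq_sum[OF carrier_U dim_chi, of "Psi n s (fst r) (snd r)"] D_eq
    by (intro sum.cong refl) (simp del: index_mult_mat_vec)
  also have "\<dots> = (\<Sum>k<D. \<Sum>x<N. input s r $ x * cnj (post s r b $ k) * basis x $ k)"
    by (simp add: sum_distrib_left mult_ac)
  also have "\<dots> = (\<Sum>x<N. \<Sum>k<D. input s r $ x * cnj (post s r b $ k) * basis x $ k)"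
    by (rule sum.swap)
  finally show ?thesis by (metis Re_complex_of_real)
qed

lemma post_absorbs:
  assumes "s \<in> BS" "r \<in> RS"
  shows post_absorbs_Proj0: "on_B0 d1 d' (Proj False s b (if b then snd r else fst r)) *\<^sub>v post s r b = post s r b"
    and post_absorbs_Proj1: "on_B1 d0 d' (Proj True s b (if b then fst r else snd r)) *\<^sub>v post s r b = post s r b"
    and post_absorbs_R: "on_B' d0 d1 (R b) *\<^sub>v post s r b = post s r b"
proof -
  let ?P0 = "Proj False s b (if b then snd r else fst r)" and ?P1 = "Proj True s b (if b then fst r else snd r)"
  have P: "orth_proj d0 ?P0" "orth_proj d1 ?P1"
    using assms by (auto intro: orth_proj_Proj0 orth_proj_Proj1)
  have car: "?P0 \<in> carrier_mat d0 d0" "?P1 \<in> carrier_mat d1 d1" "R b \<in> carrier_mat d' d'"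
    using P orth_proj_R by (simp_all add: orth_proj_carrier)
  have idem: "?P0 * ?P0 = ?P0" "?P1 * ?P1 = ?P1" "R b * R b = R b"
    using P orth_proj_R by (simp_all add: orth_proj_def)
  have Z: "success_proj s r b \<in> carrier_mat D D"
    using orth_proj_carrier[OF orth_proj_success_proj[OF assms]] .
  show "on_B0 d1 d' ?P0 *\<^sub>v post s r b = post s r b"
    unfolding post_def using car idem Z dim_state
    by (intro mult_mat_vec_absorb[where D = D] on_B0_carrier) (simp_all add: success_proj_def on_B0_mult_kron_mat)
  show "on_B1 d0 d' ?P1 *\<^sub>v post s r b = post s r b"
    unfolding post_def using car idem Z dim_state
    by (intro mult_mat_vec_absorb[where D = D] on_B1_carrier) (simp_all add: success_proj_def on_B1_mult_kron_mat)
  show "on_B' d0 d1 (R b) *\<^sub>v post s r b = post s r b"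
    unfolding post_def using car idem Z dim_state
    by (intro mult_mat_vec_absorb[where D = D] on_B'_carrier) (simp_all add: success_proj_def on_B'_mult_kron_mat)
qed

lemma cinner_post_orthogonal:
  assumes "s \<in> BS" "r \<in> RS" "t \<in> BS" "q \<in> RS"
  shows "cinner (post s r b) (post t q (\<not> b)) = 0"
proof -
  have car: "R b \<in> carrier_mat d' d'" "R (\<not> b) \<in> carrier_mat d' d'"
    using orth_proj_R by (simp_all add: orth_proj_carrier)
  have RR: "on_B' d0 d1 (R b) * on_B' d0 d1 (R (\<not> b)) = 0\<^sub>m D D"
    using on_B'_mult[OF car] projective_measurement_bool_orthogonal[OF measurement_R] by (simp add: on_B'_zero)
  have "cinner (post s r b) (post t q (\<not> b))
      = cinner (on_B' d0 d1 (R b) *\<^sub>v post s r b) (on_B' d0 d1 (R (\<not> b)) *\<^sub>v post t q (\<not> b))"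
    using post_absorbs_R assms by simp
  also have "\<dots> = cinner (post s r b) (on_B' d0 d1 (R b) *\<^sub>v (on_B' d0 d1 (R (\<not> b)) *\<^sub>v post t q (\<not> b)))"
    using orth_proj_cinner_swap[OF orth_proj_on_B'[OF orth_proj_R[of b]], of "post s r b"]
      carrier_matD[OF on_B'_carrier[OF car(2)]] dim_post[OF assms(1,2)] dim_post[OF assms(3,4)]
    by simp
  also have "on_B' d0 d1 (R b) *\<^sub>v (on_B' d0 d1 (R (\<not> b)) *\<^sub>v post t q (\<not> b))
      = (on_B' d0 d1 (R b) * on_B' d0 d1 (R (\<not> b))) *\<^sub>v post t q (\<not> b)"
    by (rule assoc_mult_mat_vec[symmetric, OF on_B'_carrier[OF car(1)] on_B'_carrier[OF car(2)]
          carrier_vecI[OF dim_post[OF assms(3,4)]]])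
  also have "cinner (post s r b) \<dots> = 0"
    unfolding RR cinner_def using dim_post[OF assms(1,2)] dim_post[OF assms(3,4)] by (simp add: scalar_prod_def)
  finally show ?thesis .
qed

lemma cmod_Gram_block_le:
  assumes s: "s \<in> BS" and t: "t \<in> BS"
  shows "cmod (\<Sum>r\<in>RS. \<Sum>q\<in>RS. cinner (input s r) (input t q) * cinner (post s r b) (post t q b))
    \<le> overlap_bound s t * sqrt (\<Sum>r\<in>RS. sqnorm (post s r b)) * sqrt (\<Sum>q\<in>RS. sqnorm (post t q b))"
proof (rule cmod_sum_cinner_le_commuting_blocks[where D = D and E = BS and F = BS
      and X = "\<lambda>e. on_B0 d1 d' (Proj False s b e)" and Y = "\<lambda>f. on_B1 d0 d' (Proj True t b f)"
      and k = "\<lambda>r. if b then snd r else fst r" and l = "\<lambda>q. if b then fst q else snd q"])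
  show "orth_proj D (on_B0 d1 d' (Proj False s b e))" if "e \<in> BS" for e
    using that s by (intro orth_proj_on_B0 orth_proj_Proj0)
  show "orth_proj D (on_B1 d0 d' (Proj True t b f))" if "f \<in> BS" for f
    using that t by (intro orth_proj_on_B1 orth_proj_Proj1)
  show "sum_to_id D BS (\<lambda>e. on_B0 d1 d' (Proj False s b e))"
    using s by (intro sum_to_id_on_B0 sum_to_id_Proj0) (auto intro: orth_proj_carrier orth_proj_Proj0)
  show "sum_to_id D BS (\<lambda>f. on_B1 d0 d' (Proj True t b f))"
    using t by (intro sum_to_id_on_B1 sum_to_id_Proj1) (auto intro: orth_proj_carrier orth_proj_Proj1)
  show "on_B0 d1 d' (Proj False s b e) * on_B1 d0 d' (Proj True t b f)
      = on_B1 d0 d' (Proj True t b f) * on_B0 d1 d' (Proj False s b e)" if "e \<in> BS" "f \<in> BS" for e f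
    using that s t by (intro on_B0_on_B1_commute orth_proj_carrier orth_proj_Proj0 orth_proj_Proj1)
  show "op_norm_le {r \<in> RS. (if b then snd r else fst r) = e} {q \<in> RS. (if b then fst q else snd q) = f}
      (\<lambda>r q. cinner (input s r) (input t q)) (overlap_bound s t)" if "e \<in> BS" "f \<in> BS" for e f
    unfolding input_def using op_norm_le_Psi_blocks[OF s t that] .
qed (use s t post_absorbs_Proj0 post_absorbs_Proj1 dim_post overlap_bound_nonneg in auto)

lemma cmod_Gram_le:
  assumes s: "s \<in> BS" and t: "t \<in> BS"
  shows "cmod (\<Sum>(r, b)\<in>RS \<times> UNIV. \<Sum>(q, b')\<in>RS \<times> UNIV. cinner (input s r) (input t q) * cinner (post s r b) (post t q b'))
    \<le> overlap_bound s t * sqrt (\<Sum>(r, b)\<in>RS \<times> UNIV. sqnorm (post s r b)) * sqrt (\<Sum>(q, b)\<in>RS \<times> UNIV. sqnorm (post t q b))"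
proof -
  define A where "A b = (\<Sum>r\<in>RS. sqnorm (post s r b))" for b
  define B where "B b = (\<Sum>q\<in>RS. sqnorm (post t q b))" for b
  have "(\<Sum>(r, b)\<in>RS \<times> UNIV. \<Sum>(q, b')\<in>RS \<times> UNIV. cinner (input s r) (input t q) * cinner (post s r b) (post t q b'))
     = (\<Sum>b\<in>UNIV. \<Sum>r\<in>RS. \<Sum>q\<in>RS. \<Sum>b'\<in>UNIV. cinner (input s r) (input t q) * cinner (post s r b) (post t q b'))"
    unfolding sum.cartesian_product'[of _ RS UNIV] prod.case by (rule sum.swap)
  also have "\<dots> = (\<Sum>b\<in>UNIV. \<Sum>r\<in>RS. \<Sum>q\<in>RS. cinner (input s r) (input t q) * cinner (post s r b) (post t q b))"
  proof (intro sum.cong refl)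
    fix b r q assume r: "r \<in> RS" and q: "q \<in> RS"
    show "(\<Sum>b'\<in>UNIV. cinner (input s r) (input t q) * cinner (post s r b) (post t q b'))
        = cinner (input s r) (input t q) * cinner (post s r b) (post t q b)"
      using cinner_post_orthogonal[OF s r t q, of b] by (cases b) (simp_all add: sum_UNIV_bool)
  qed
  also have "cmod \<dots> \<le> (\<Sum>b\<in>UNIV. overlap_bound s t * (sqrt (A b) * sqrt (B b)))"
    unfolding A_def B_def
    by (rule order_trans[OF norm_sum sum_mono]) (use cmod_Gram_block_le[OF s t] in \<open>simp add: mult_ac\<close>)
  also have "\<dots> \<le> overlap_bound s t * (sqrt (sum A UNIV) * sqrt (sum B UNIV))"
    unfolding sum_distrib_left[symmetric] A_def B_def
    by (intro mult_left_mono sum_sqrt_mult_le) (simp_all add: sum_nonneg sqnorm_nonneg overlap_bound_nonneg)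
  also have "sum A UNIV = (\<Sum>(r, b)\<in>RS \<times> UNIV. sqnorm (post s r b))"
    unfolding A_def sum.cartesian_product'[of _ RS UNIV] prod.case by (rule sum.swap)
  also have "sum B UNIV = (\<Sum>(q, b)\<in>RS \<times> UNIV. sqnorm (post t q b))"
    unfolding B_def sum.cartesian_product'[of _ RS UNIV] prod.case by (rule sum.swap)
  finally show ?thesis by (simp add: mult_ac)
qed

lemma T_le: "T \<le> real N * (1 + 1 / sqrt 2) ^ n"
proof -
  define J where "J = BS \<times> (RS \<times> (UNIV :: bool set))"
  define a where "a j = input (fst j) (fst (snd j))" for j :: "bool list \<times> (bool list \<times> bool list) \<times> bool"
  define v where "v j = post (fst j) (fst (snd j)) (snd (snd j))" for j :: "bool list \<times> (bool list \<times> bool list) \<times> bool"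
  define S where "S s = (\<Sum>(r, b)\<in>RS \<times> UNIV. sqnorm (post s r b))" for s
  have "T = (\<Sum>j\<in>J. Re (\<Sum>x<N. \<Sum>k<D. a j $ x * cnj (v j $ k) * basis x $ k))"
    unfolding T_def J_def sum.cartesian_product'[of _ BS "RS \<times> UNIV"] a_def v_def
    by (intro sum.cong refl) (auto simp: sqnorm_post_eq)
  also have "\<dots> = Re (\<Sum>j\<in>J. \<Sum>x<N. \<Sum>k<D. a j $ x * cnj (v j $ k) * basis x $ k)"
    by (simp only: Re_sum)
  also have "\<dots> \<le> sqrt (real N) * sqrt (Re (\<Sum>j\<in>J. \<Sum>j'\<in>J. (\<Sum>x<N. cnj (a j $ x) * a j' $ x) * (\<Sum>k<D. cnj (v j $ k) * v j' $ k)))"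
    by (rule order_trans[OF complex_Re_le_cmod cmod_sum_le_sqrt_Gram])
      (simp_all add: a_def real_vec_input sqnorm_basis)
  also have "Re (\<Sum>j\<in>J. \<Sum>j'\<in>J. (\<Sum>x<N. cnj (a j $ x) * a j' $ x) * (\<Sum>k<D. cnj (v j $ k) * v j' $ k))
      = Re (\<Sum>s\<in>BS. \<Sum>t\<in>BS. \<Sum>(r, b)\<in>RS \<times> UNIV. \<Sum>(q, b')\<in>RS \<times> UNIV.
          cinner (input s r) (input t q) * cinner (post s r b) (post t q b'))"
    unfolding J_def sum.cartesian_product'[of _ BS "RS \<times> UNIV"] a_def v_def
    by (subst (2) sum.swap) (auto simp: cinner_def input_def dim_post intro!: sum.cong arg_cong[where f = Re])
  also have "\<dots> \<le> (\<Sum>s\<in>BS. \<Sum>t\<in>BS. overlap_bound s t * (sqrt (S s) * sqrt (S t)))"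
    unfolding S_def
    by (rule order_trans[OF complex_Re_le_cmod order_trans[OF norm_sum sum_mono[OF order_trans[OF norm_sum sum_mono]]]])
      (use cmod_Gram_le in \<open>simp add: mult_ac\<close>)
  also have "\<dots> \<le> (1 + 1 / sqrt 2) ^ n * (\<Sum>s\<in>BS. S s)"
    by (rule sum_overlap_bound_sqrt_mult_le) (simp add: S_def sum_nonneg sqnorm_nonneg split_def)
  also have "(\<Sum>s\<in>BS. S s) = T" unfolding S_def T_def ..
  finally show ?thesis
    by (rule le_of_le_sqrt_mult[rotated 2]) simp_all
qed

lemma success_prob_eq: "Re (success_prob n chi U R Proj) = T / 2 ^ (3 * n)"
proof -
  have "(\<Sum>r0\<in>BS. \<Sum>r1\<in>BS. \<Sum>s\<in>BS. \<Sum>b\<in>UNIV.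
        let rb = (if b then r1 else r0); rnb = (if b then r0 else r1); \<Phi> = Phi n chi U s r0 r1
        in cinner \<Phi> (kron_mat (kron_mat (Proj False s b rb) (Proj True s b rnb)) (R b) *\<^sub>v \<Phi>))
     = (\<Sum>r0\<in>BS. \<Sum>r1\<in>BS. \<Sum>s\<in>BS. \<Sum>b\<in>UNIV. of_real (sqnorm (post s (r0, r1) b)))"
  proof (intro sum.cong refl)
    fix r0 r1 s b assume "r0 \<in> BS" "r1 \<in> BS" "s \<in> BS"
    then show "(let rb = (if b then r1 else r0); rnb = (if b then r0 else r1); \<Phi> = Phi n chi U s r0 r1
        in cinner \<Phi> (kron_mat (kron_mat (Proj False s b rb) (Proj True s b rnb)) (R b) *\<^sub>v \<Phi>))
      = of_real (sqnorm (post s (r0, r1) b))"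
      using cinner_state_success_proj[of s "(r0, r1)" b] by (cases b) (simp_all add: state_def success_proj_def)
  qed
  also have "\<dots> = (\<Sum>r0\<in>BS. \<Sum>s\<in>BS. \<Sum>r1\<in>BS. \<Sum>b\<in>UNIV. of_real (sqnorm (post s (r0, r1) b)))"
    by (rule sum.cong[OF refl], rule sum.swap)
  also have "\<dots> = (\<Sum>s\<in>BS. \<Sum>r0\<in>BS. \<Sum>r1\<in>BS. \<Sum>b\<in>UNIV. of_real (sqnorm (post s (r0, r1) b)))"
    by (rule sum.swap)
  also have "\<dots> = of_real T"
    unfolding T_def by (simp add: sum.cartesian_product')
  finally show ?thesis
    unfolding success_prob_def by simp
qed

end

theorem mainTheorem1:
  fixes n dE d0 d1 d' :: nat and chi :: "complex vec" and U :: "complex mat"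
    and R :: "bool \<Rightarrow> complex mat"
    and Proj :: "bool \<Rightarrow> bool list \<Rightarrow> bool \<Rightarrow> bool list \<Rightarrow> complex mat"
  assumes "n \<ge> 1"
    and "strategy n dE chi U d0 d1 d' R Proj"
  shows "Re (success_prob n chi U R Proj) \<le> (1/2 + 1 / (2 * sqrt 2)) ^ n"
proof -
  interpret cheating_strategy n dE chi U d0 d1 d' R Proj by (rule cheating_strategy.intro[OF assms(2)])
  have "(2::real) ^ (3 * n) = 4 ^ n * 2 ^ n"
    by (simp add: power_mult flip: power_mult_distrib)
  have "Re (success_prob n chi U R Proj) = T / 2 ^ (3 * n)" by (rule success_prob_eq)
  also have "\<dots> \<le> real (4 ^ n) * (1 + 1 / sqrt 2) ^ n / 2 ^ (3 * n)"
    using T_le by (intro divide_right_mono) auto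
  also have "\<dots> = ((1 + 1 / sqrt 2) / 2) ^ n"
    using \<open>(2::real) ^ (3 * n) = 4 ^ n * 2 ^ n\<close> by (simp add: power_divide)
  also have "(1 + 1 / sqrt 2) / 2 = 1/2 + 1 / (2 * sqrt 2)"
    by (simp add: field_simps)
  finally show ?thesis .
qed

end
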